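(* Let $\mathcal{X},\mathcal{U}$, $K$, $f$, $g$, $h$, $L_f$, $\mu_f$, $\mu_g$, $\mu_{h^*}$ and the algorithm RandProx with stochastic operators $\mathcal{R}^t$ and constants $\omega\ge 0$, $\omega_{\mathrm{ran}}\ge 0$, $\zeta\in[0,1]$ be as described in the context. Suppose that $\mu_f>0$ or $\mu_g>0$, and that $\mu_{h^*}>0$. Suppose that $0<\gamma<\frac{2}{L_f}$, $\tau>0$, and $\gamma\tau\big((1-\zeta)\|K\|^2+\omega_{\mathrm{ran}}\big)\le 1$. For every $t\ge 0$ define $$\Psi^t:=\frac{1}{\gamma}\|x^t-x^\star\|^2+(1+\omega)\Big(\frac{1}{\tau}+2\mu_{h^*}\Big)\|u^t-u^\star\|^2,$$ where $x^\star$ and $u^\star$ are the unique solutions of the primal and dual problems, respectively. Then for every $t\ge 0$, $\mathbb{E}[\Psi^t]\le c^t\Psi^0$, where $$c:=\max\left(\frac{(1-\gamma\mu_f)^2}{1+\gamma\mu_g},\ \frac{(\gamma L_f-1)^2}{1+\gamma\mu_g},\ 1-\frac{2\tau\mu_{h^*}}{(1+\omega)(1+2\tau\mu_{h^*})}\right)<1.$$ Moreover, $(x^t)_{t\in\mathbb{N}}$ and $(\hat{x}^t)_{t\in\mathbb{N}}$ both converge to $x^\star$ and $(u^t)_{t\in\mathbb{N}}$ converges to $u^\star$, almost surely.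
   Context: $\mathcal{X},\mathcal{U}$ are finite-dimensional real Hilbert spaces, $K:\mathcal{X}\to\mathcal{U}$ is a nonzero linear operator with adjoint $K^*$ and operator norm $\|K\|$. $f:\mathcal{X}\to\mathbb{R}$ is convex and $L_f$-smooth ($\nabla f$ is $L_f$-Lipschitz, $L_f>0$); $g:\mathcal{X}\to\mathbb{R}\cup\{+\infty\}$ and $h:\mathcal{U}\to\mathbb{R}\cup\{+\infty\}$ are proper closed convex; $h^*$ is the convex conjugate of $h$. A convex function $\phi$ is $\mu_\phi$-strongly convex ($\mu_\phi\ge 0$) if $\phi-\frac{\mu_\phi}{2}\|\cdot\|^2$ is convex; $\mu_f,\mu_g,\mu_{h^*}\ge 0$ denote such constants for $f,g,h^*$. $\mathrm{prox}_{\gamma\phi}(x):=\arg\min_{x'}\big(\gamma\phi(x')+\frac12\|x'-x\|^2\big)$. Primal problem: minimize $f(x)+g(x)+h(Kx)$ over $x\in\mathcal{X}$; dual problem: minimize $(f+g)^*(-K^*u)+h^*(u)$ over $u\in\mathcal{U}$. It is assumed that there exists $(x^\star,u^\star)$ with $0\in\nabla f(x^\star)+\partial g(x^\star)+K^*u^\star$ and $0\in -Kx^\star+\partial h^*(u^\star)$ (then $x^\star$ solves the primal and $u^\star$ the dual problem). Algorithm RandProx: inputs $x^0\in\mathcal{X}$, $u^0\in\mathcal{U}$, $\gamma>0$, $\tau>0$, $\omega\ge0$; $v^0:=K^*u^0$; for $t=0,1,\dots$: $\hat{x}^t:=\mathrm{prox}_{\gamma g}(x^t-\gamma\nabla f(x^t)-\gamma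 v^t)$; $u^{t+1}:=u^t+\frac{1}{1+\omega}\mathcal{R}^t\big(\mathrm{prox}_{\tau h^*}(u^t+\tau K\hat{x}^t)-u^t\big)$; $v^{t+1}:=K^*u^{t+1}$; $x^{t+1}:=\hat{x}^t-\gamma(1+\omega)(v^{t+1}-v^t)$. Here $\mathcal{F}_t$ is the $\sigma$-algebra generated by $(x^0,u^0),\dots,(x^t,u^t)$, $r^t:=\mathrm{prox}_{\tau h^*}(u^t+\tau K\hat{x}^t)-u^t$, and $\mathcal{R}^t(r^t)$ is a $\mathcal{U}$-valued random variable (a stochastic estimate of $r^t$) satisfying, for every $t\ge0$: $\mathbb{E}[\mathcal{R}^t(r^t)\mid\mathcal{F}_t]=r^t$, $\mathbb{E}[\|\mathcal{R}^t(r^t)-r^t\|^2\mid\mathcal{F}_t]\le\omega\|r^t\|^2$, and $\mathbb{E}[\|K^*(\mathcal{R}^t(r^t)-r^t)\|^2\mid\mathcal{F}_t]\le\omega_{\mathrm{ran}}\|r^t\|^2-\zeta\|K^*r^t\|^2$, for given constants $\omega_{\mathrm{ran}}\ge0$, $\zeta\in[0,1]$. *)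

theory Defs
  imports "HOL-Analysis.Analysis" "HOL-Probability.Probability"
begin

definition proper_fun :: "('a \<Rightarrow> ereal) \<Rightarrow> bool" where
  "proper_fun \<phi> \<longleftrightarrow> (\<forall>x. \<phi> x \<noteq> -\<infinity>) \<and> (\<exists>x. \<phi> x \<noteq> \<infinity>)"

text \<open>closed = lower semicontinuous = closed epigraph\<close>
definition closed_fun :: "('a::topological_space \<Rightarrow> ereal) \<Rightarrow> bool" where
  "closed_fun \<phi> \<longleftrightarrow> closed {(x, t::real). \<phi> x \<le> ereal t}"

definition convex_fun :: "('a::real_vector \<Rightarrow> ereal) \<Rightarrow> bool" where
  "convex_fun \<phi> \<longleftrightarrow> (\<forall>x y a. 0 < a \<and> a < 1 \<longrightarrow>
      \<phi> ((1 - a) *\<^sub>R x + a *\<^sub>R y) \<le> ereal (1 - a) * \<phi> x + ereal a * \<phi> y)"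

definition strongly_convex_fun :: "real \<Rightarrow> ('a::real_normed_vector \<Rightarrow> ereal) \<Rightarrow> bool" where
  "strongly_convex_fun \<mu> \<phi> \<longleftrightarrow> convex_fun (\<lambda>x. \<phi> x - ereal (\<mu> / 2 * (norm x)\<^sup>2))"

definition conjugate :: "('a::real_inner \<Rightarrow> ereal) \<Rightarrow> 'a \<Rightarrow> ereal" where
  "conjugate \<phi> y = (SUP x. ereal (x \<bullet> y) - \<phi> x)"

definition subdiff :: "('a::real_inner \<Rightarrow> ereal) \<Rightarrow> 'a \<Rightarrow> 'a set" where
  "subdiff \<phi> x = {s. \<phi> x < \<infinity> \<and> (\<forall>y. \<phi> x + ereal (s \<bullet> (y - x)) \<le> \<phi> y)}"

definition prox :: "real \<Rightarrow> ('a::real_inner \<Rightarrow> ereal) \<Rightarrow> 'a \<Rightarrow> 'a" where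
  "prox \<gamma> \<phi> x = (THE p. \<forall>y. ereal \<gamma> * \<phi> p + ereal ((norm (p - x))\<^sup>2 / 2)
                               \<le> ereal \<gamma> * \<phi> y + ereal ((norm (y - x))\<^sup>2 / 2))"

definition cond_exp_vec_eq :: "'s measure \<Rightarrow> 's measure \<Rightarrow> ('s \<Rightarrow> 'a::euclidean_space) \<Rightarrow> ('s \<Rightarrow> 'a) \<Rightarrow> bool" where
  "cond_exp_vec_eq M F X Y \<longleftrightarrow> integrable M X \<and>
     (\<forall>b\<in>Basis. AE s in M. real_cond_exp M F (\<lambda>s. X s \<bullet> b) s = Y s \<bullet> b)"

definition gen_filtration :: "'s measure \<Rightarrow> (nat \<Rightarrow> 's \<Rightarrow> 'b::topological_space) \<Rightarrow> nat \<Rightarrow> 's measure" where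
  "gen_filtration M Z t = sigma (space M)
     (\<Union>i\<in>{..t}. {Z i -` B \<inter> space M | B. B \<in> sets borel})"

end

theory Submission
  imports Defs
begin

lemma norm_sq_diff_scaleR:
  fixes u v :: "'a::real_inner"
  shows "(norm (a *\<^sub>R u - b *\<^sub>R v))\<^sup>2 = a\<^sup>2 * (norm u)\<^sup>2 - 2 * a * b * (u \<bullet> v) + b\<^sup>2 * (norm v)\<^sup>2"
  unfolding power2_norm_eq_inner
  by (simp add: inner_diff_left inner_diff_right inner_commute algebra_simps power2_eq_square)

lemma norm_sq_add_scaleR:
  fixes u v :: "'a::real_inner"
  shows "(norm (u + c *\<^sub>R v))\<^sup>2 = (norm u)\<^sup>2 + 2 * c * (u \<bullet> v) + c\<^sup>2 * (norm v)\<^sup>2"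
  unfolding power2_norm_eq_inner
  by (simp add: inner_add_left inner_add_right inner_commute algebra_simps power2_eq_square)

lemma norm_sq_add_le:
  fixes a b :: "'a::real_inner"
  shows "(norm (a + b))\<^sup>2 \<le> 2 * (norm a)\<^sup>2 + 2 * (norm b)\<^sup>2"
proof -
  have "0 \<le> (norm (a - b))\<^sup>2" by simp
  then show ?thesis
    unfolding power2_norm_eq_inner by (simp add: inner_add_left inner_add_right inner_diff_left
        inner_diff_right inner_commute)
qed

lemma norm_sq_relaxed_step:
  fixes d r :: "'a::real_inner"
  assumes "1 + \<omega> \<noteq> 0"
  shows "(1 + \<omega>) * (norm (d + (1 / (1 + \<omega>)) *\<^sub>R r))\<^sup>2 + \<omega> / (1 + \<omega>) * (norm r)\<^sup>2
         = \<omega> * (norm d)\<^sup>2 + (norm (d + r))\<^sup>2"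
proof -
  define v where "v = (1 / (1 + \<omega>)) *\<^sub>R r"
  have r: "r = (1 + \<omega>) *\<^sub>R v" using assms by (simp add: v_def)
  have "(norm r)\<^sup>2 = (1 + \<omega>)\<^sup>2 * (norm v)\<^sup>2" unfolding r by (simp add: power_mult_distrib)
  then have "\<omega> / (1 + \<omega>) * (norm r)\<^sup>2 = \<omega> * (1 + \<omega>) * (norm v)\<^sup>2"
    using assms by (simp add: power2_eq_square)
  moreover have "(1 + \<omega>) * (norm (d + v))\<^sup>2 + \<omega> * (1 + \<omega>) * (norm v)\<^sup>2
      = \<omega> * (norm d)\<^sup>2 + (norm (d + (1 + \<omega>) *\<^sub>R v))\<^sup>2"
    unfolding power2_norm_eq_inner
    by (simp add: inner_add_left inner_add_right inner_commute algebra_simps)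
  ultimately show ?thesis by (simp add: v_def[symmetric] r[symmetric])
qed

lemma convex_on_gradient_ineq:
  fixes f :: "'a::real_inner \<Rightarrow> real"
  assumes cvx: "convex_on UNIV f" and d: "\<And>y. (f has_derivative (\<lambda>d. G y \<bullet> d)) (at y)"
  shows "f y + G y \<bullet> (z - y) \<le> f z"
proof -
  define v where "v = z - y"
  define \<theta> where "\<theta> = (\<lambda>a::real. f (y + a *\<^sub>R v))"
  have l: "((\<lambda>a. y + a *\<^sub>R v) has_derivative (\<lambda>a. a *\<^sub>R v)) (at 0)"
    by (auto intro!: derivative_eq_intros)
  have "(\<theta> has_derivative (\<lambda>a. G y \<bullet> (a *\<^sub>R v))) (at 0)"
    using has_derivative_compose[OF l d[of "y + 0 *\<^sub>R v"]] unfolding \<theta>_def by simp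
  moreover have "(\<lambda>a. G y \<bullet> (a *\<^sub>R v)) = (*) (G y \<bullet> v)" by (rule ext) simp
  ultimately have "(\<theta> has_field_derivative (G y \<bullet> v)) (at 0)"
    unfolding has_field_derivative_def by simp
  then have "((\<lambda>a. (\<theta> a - \<theta> 0) / (a - 0)) \<longlongrightarrow> G y \<bullet> v) (at_right 0)"
    by (simp add: has_field_derivative_iff tendsto_mono[OF at_le[OF subset_UNIV]])
  moreover have "eventually (\<lambda>a. (\<theta> a - \<theta> 0) / (a - 0) \<le> f z - f y) (at_right (0::real))"
    using eventually_at_right_real[OF zero_less_one]
  proof eventually_elim
    case (elim a)
    have "y + a *\<^sub>R v = (1 - a) *\<^sub>R y + a *\<^sub>R z" by (simp add: v_def algebra_simps)
    then have "\<theta> a \<le> (1 - a) * f y + a * f z"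
      using convex_onD[OF cvx, of a y z] elim unfolding \<theta>_def by simp
    then show ?case using elim by (simp add: \<theta>_def divide_simps algebra_simps)
  qed
  ultimately have "G y \<bullet> v \<le> f z - f y"
    by (intro tendsto_le[OF trivial_limit_at_right_real tendsto_const])
  then show ?thesis unfolding v_def by simp
qed

lemma descent_lemma:
  fixes f :: "'a::real_inner \<Rightarrow> real"
  assumes d: "\<And>y. (f has_derivative (\<lambda>d. G y \<bullet> d)) (at y)"
    and lip: "\<And>y z. norm (G y - G z) \<le> L * norm (y - z)"
  shows "f z \<le> f y + G y \<bullet> (z - y) + L / 2 * (norm (z - y))\<^sup>2"
proof -
  define v where "v = z - y"
  define \<theta> where "\<theta> = (\<lambda>s::real. f (y + s *\<^sub>R v) - s * (G y \<bullet> v) - L / 2 * s\<^sup>2 * (norm v)\<^sup>2)"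
  have der: "(\<theta> has_real_derivative ((G (y + s *\<^sub>R v) - G y) \<bullet> v - L * s * (norm v)\<^sup>2)) (at s)" for s
  proof -
    have "((\<lambda>a. y + a *\<^sub>R v) has_derivative (\<lambda>a. a *\<^sub>R v)) (at s)"
      by (auto intro!: derivative_eq_intros)
    from has_derivative_compose[OF this d]
    have "((\<lambda>a. f (y + a *\<^sub>R v)) has_derivative (\<lambda>a. G (y + s *\<^sub>R v) \<bullet> (a *\<^sub>R v))) (at s)"
      by simp
    moreover have "(\<lambda>a. G (y + s *\<^sub>R v) \<bullet> (a *\<^sub>R v)) = (*) (G (y + s *\<^sub>R v) \<bullet> v)"
      by (rule ext) simp
    ultimately have "((\<lambda>a. f (y + a *\<^sub>R v)) has_real_derivative (G (y + s *\<^sub>R v) \<bullet> v)) (at s)"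
      unfolding has_field_derivative_def by simp
    then show ?thesis unfolding \<theta>_def
      by (auto intro!: derivative_eq_intros simp: inner_diff_left power2_eq_square)
  qed
  have "(G (y + s *\<^sub>R v) - G y) \<bullet> v - L * s * (norm v)\<^sup>2 \<le> 0" if "0 \<le> s" for s
  proof -
    have "(G (y + s *\<^sub>R v) - G y) \<bullet> v \<le> norm (G (y + s *\<^sub>R v) - G y) * norm v"
      by (rule norm_cauchy_schwarz)
    also have "\<dots> \<le> L * norm (s *\<^sub>R v) * norm v"
      using lip[of "y + s *\<^sub>R v" y] by (simp add: mult_right_mono)
    also have "\<dots> = L * s * (norm v)\<^sup>2" using that by (simp add: power2_eq_square)
    finally show ?thesis by simp
  qed
  then have "\<theta> 1 \<le> \<theta> 0"
    using der by (intro DERIV_nonpos_imp_nonincreasing[of 0 1 \<theta>]) (auto simp del: diff_le_0_iff_le)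
  then show ?thesis unfolding \<theta>_def v_def by (simp add: algebra_simps)
qed

lemma has_derivative_minus_half_norm_sq:
  assumes "\<And>y. (f has_derivative (\<lambda>d. G y \<bullet> d)) (at y)"
  shows "((\<lambda>y. f y - \<mu> / 2 * (norm y)\<^sup>2) has_derivative (\<lambda>d. (G y - \<mu> *\<^sub>R y) \<bullet> d)) (at y)"
proof -
  have "((\<lambda>y. f y - \<mu> / 2 * (y \<bullet> y)) has_derivative (\<lambda>d. G y \<bullet> d - \<mu> / 2 * (y \<bullet> d + d \<bullet> y))) (at y)"
    by (intro derivative_intros assms)
  moreover have "(\<lambda>d. G y \<bullet> d - \<mu> / 2 * (y \<bullet> d + d \<bullet> y)) = (\<lambda>d. (G y - \<mu> *\<^sub>R y) \<bullet> d)"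
    by (auto simp: inner_commute inner_diff_left algebra_simps)
  ultimately show ?thesis by (simp add: power2_norm_eq_inner)
qed

lemma convex_gradient_monotone:
  fixes \<phi> :: "'a::real_inner \<Rightarrow> real"
  assumes "convex_on UNIV \<phi>" and "\<And>y. (\<phi> has_derivative (\<lambda>d. H y \<bullet> d)) (at y)"
  shows "0 \<le> (H x - H y) \<bullet> (x - y)"
  using convex_on_gradient_ineq[OF assms, of x y] convex_on_gradient_ineq[OF assms, of y x]
  by (simp add: inner_diff_left inner_diff_right inner_commute)

lemma strong_convexity_le_lipschitz:
  fixes f :: "'a::euclidean_space \<Rightarrow> real"
  assumes d: "\<And>y. (f has_derivative (\<lambda>d. G y \<bullet> d)) (at y)"
    and lip: "\<And>y z. norm (G y - G z) \<le> L * norm (y - z)"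
    and sc: "convex_on UNIV (\<lambda>y. f y - \<mu> / 2 * (norm y)\<^sup>2)"
  shows "\<mu> \<le> L"
proof -
  obtain b :: 'a where "b \<in> Basis" using nonempty_Basis by blast
  then have b: "norm b = 1" by simp
  have "0 \<le> ((G b - \<mu> *\<^sub>R b) - (G 0 - \<mu> *\<^sub>R 0)) \<bullet> (b - 0)"
    by (rule convex_gradient_monotone[OF sc has_derivative_minus_half_norm_sq[OF d]])
  then have "\<mu> \<le> (G b - G 0) \<bullet> b"
    using b by (simp add: inner_diff_left power2_norm_eq_inner[symmetric])
  also have "\<dots> \<le> norm (G b - G 0) * norm b" by (rule norm_cauchy_schwarz)
  also have "\<dots> \<le> L" using lip[of b 0] b by simp
  finally show ?thesis .
qed

text \<open>A convex function with a quadratic upper bound has a cocoercive gradient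
  (Baillon--Haddad); the bound is compared at the two points \<open>x - s \<delta>\<close> and \<open>y + s \<delta>\<close>.\<close>

lemma cocoercive_of_quadratic_upper_bound:
  fixes \<phi> :: "'a::real_inner \<Rightarrow> real"
  assumes cvx: "convex_on UNIV \<phi>" and d: "\<And>y. (\<phi> has_derivative (\<lambda>d. H y \<bullet> d)) (at y)"
    and up: "\<And>y z. \<phi> z \<le> \<phi> y + H y \<bullet> (z - y) + l / 2 * (norm (z - y))\<^sup>2" and l: "0 \<le> l"
  shows "(norm (H x - H y))\<^sup>2 \<le> l * ((H x - H y) \<bullet> (x - y))"
proof -
  define \<delta> where "\<delta> = H x - H y"
  have sq: "(norm \<delta>)\<^sup>2 = H x \<bullet> \<delta> - H y \<bullet> \<delta>"
    by (simp add: \<delta>_def power2_norm_eq_inner inner_diff_left)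
  have family: "(2 * s - l * s\<^sup>2) * (norm \<delta>)\<^sup>2 \<le> \<delta> \<bullet> (x - y)" for s
  proof -
    have "\<phi> y + (H y \<bullet> (x - y) - s * (H y \<bullet> \<delta>)) \<le> \<phi> (x - s *\<^sub>R \<delta>)"
      using convex_on_gradient_ineq[OF cvx d, of y "x - s *\<^sub>R \<delta>"] by (simp add: inner_diff_right)
    moreover have "\<phi> x + (s * (H x \<bullet> \<delta>) - H x \<bullet> (x - y)) \<le> \<phi> (y + s *\<^sub>R \<delta>)"
      using convex_on_gradient_ineq[OF cvx d, of x "y + s *\<^sub>R \<delta>"]
      by (simp add: inner_diff_right inner_add_right algebra_simps)
    moreover have "\<phi> (x - s *\<^sub>R \<delta>) \<le> \<phi> x - s * (H x \<bullet> \<delta>) + l * (s\<^sup>2 * (norm \<delta>)\<^sup>2) / 2"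
      using up[of "x - s *\<^sub>R \<delta>" x] by (simp add: power_mult_distrib)
    moreover have "\<phi> (y + s *\<^sub>R \<delta>) \<le> \<phi> y + s * (H y \<bullet> \<delta>) + l * (s\<^sup>2 * (norm \<delta>)\<^sup>2) / 2"
      using up[of "y + s *\<^sub>R \<delta>" y] by (simp add: power_mult_distrib)
    moreover have "\<delta> \<bullet> (x - y) = H x \<bullet> (x - y) - H y \<bullet> (x - y)"
      by (simp add: \<delta>_def inner_diff_left)
    moreover have "(2 * s - l * s\<^sup>2) * (norm \<delta>)\<^sup>2
        = 2 * s * (H x \<bullet> \<delta>) - 2 * s * (H y \<bullet> \<delta>) - l * (s\<^sup>2 * (norm \<delta>)\<^sup>2)"
      unfolding sq by (simp add: algebra_simps)
    ultimately show ?thesis by linarith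
  qed
  show ?thesis
  proof (cases "l = 0")
    case True
    have "(norm \<delta>)\<^sup>2 = 0"
    proof (rule ccontr)
      assume "(norm \<delta>)\<^sup>2 \<noteq> 0"
      then have pos: "(norm \<delta>)\<^sup>2 > 0" by simp
      from family[of "(\<bar>\<delta> \<bullet> (x - y)\<bar> + 1) / (2 * (norm \<delta>)\<^sup>2)"] True pos
      have "2 * (norm \<delta>)\<^sup>2 + 2 * (\<bar>\<delta> \<bullet> (x - y)\<bar> * (norm \<delta>)\<^sup>2) \<le> 2 * (\<delta> \<bullet> (x - y) * (norm \<delta>)\<^sup>2)"
        by (simp add: field_simps)
      moreover have "\<delta> \<bullet> (x - y) * (norm \<delta>)\<^sup>2 \<le> \<bar>\<delta> \<bullet> (x - y)\<bar> * (norm \<delta>)\<^sup>2"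
        by (simp add: mult_right_mono)
      ultimately show False using pos by linarith
    qed
    then show ?thesis using True by (simp add: \<delta>_def)
  next
    case False
    with l have "l > 0" by simp
    with family[of "1 / l"] show ?thesis
      by (simp add: \<delta>_def power2_eq_square field_simps)
  qed
qed

lemma gradient_step_contraction:
  fixes f :: "'a::real_inner \<Rightarrow> real"
  assumes d: "\<And>y. (f has_derivative (\<lambda>d. G y \<bullet> d)) (at y)"
    and lip: "\<And>y z. norm (G y - G z) \<le> L * norm (y - z)"
    and sc: "convex_on UNIV (\<lambda>y. f y - \<mu> / 2 * (norm y)\<^sup>2)"
    and \<mu>: "0 \<le> \<mu>" "\<mu> \<le> L" and \<gamma>: "0 < \<gamma>"
  shows "(norm ((x - \<gamma> *\<^sub>R G x) - (y - \<gamma> *\<^sub>R G y)))\<^sup>2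
         \<le> max ((1 - \<gamma> * \<mu>)\<^sup>2) ((\<gamma> * L - 1)\<^sup>2) * (norm (x - y))\<^sup>2"
proof -
  define H where "H = (\<lambda>y. G y - \<mu> *\<^sub>R y)"
  define \<delta> where "\<delta> = H x - H y"
  define E where "E = (norm (x - y))\<^sup>2"
  define D where "D = (norm \<delta>)\<^sup>2"
  define t where "t = \<delta> \<bullet> (x - y)"
  have dH: "((\<lambda>y. f y - \<mu> / 2 * (norm y)\<^sup>2) has_derivative (\<lambda>d. H y \<bullet> d)) (at y)" for y
    unfolding H_def by (rule has_derivative_minus_half_norm_sq[OF d])
  have up: "f z - \<mu> / 2 * (norm z)\<^sup>2
      \<le> (f y - \<mu> / 2 * (norm y)\<^sup>2) + H y \<bullet> (z - y) + (L - \<mu>) / 2 * (norm (z - y))\<^sup>2" for y z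
  proof -
    have "f z \<le> f y + G y \<bullet> (z - y) + L / 2 * (norm (z - y))\<^sup>2"
      by (rule descent_lemma[OF d lip])
    moreover have "\<mu> / 2 * (norm z)\<^sup>2 = \<mu> / 2 * (norm y)\<^sup>2 + \<mu> * (y \<bullet> (z - y)) + \<mu> / 2 * (norm (z - y))\<^sup>2"
      by (simp add: power2_norm_eq_inner inner_diff_left inner_diff_right inner_commute field_simps)
    moreover have "H y \<bullet> (z - y) = G y \<bullet> (z - y) - \<mu> * (y \<bullet> (z - y))"
      by (simp add: H_def inner_diff_left)
    moreover have "(L - \<mu>) / 2 * (norm (z - y))\<^sup>2 = L / 2 * (norm (z - y))\<^sup>2 - \<mu> / 2 * (norm (z - y))\<^sup>2"
      by (simp add: algebra_simps diff_divide_distrib)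
    ultimately show ?thesis by linarith
  qed
  have coco: "D \<le> (L - \<mu>) * t"
    unfolding D_def t_def \<delta>_def using \<mu> by (intro cocoercive_of_quadratic_upper_bound[OF sc dH up]) simp
  have t0: "0 \<le> t" unfolding t_def \<delta>_def by (rule convex_gradient_monotone[OF sc dH])
  have tE: "t \<le> (L - \<mu>) * E"
  proof (cases "t = 0")
    case False
    have "t\<^sup>2 \<le> E * D"
      unfolding t_def E_def D_def using Cauchy_Schwarz_ineq[of \<delta> "x - y"]
      by (simp add: power2_norm_eq_inner inner_commute mult.commute)
    also have "\<dots> \<le> E * ((L - \<mu>) * t)" using coco by (simp add: E_def mult_left_mono)
    finally have "t * t \<le> ((L - \<mu>) * E) * t" by (simp add: power2_eq_square algebra_simps)
    then show ?thesis using False t0 by (auto intro: mult_right_le_imp_le)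
  qed (use \<mu> in \<open>simp add: E_def\<close>)
  have w: "(x - \<gamma> *\<^sub>R G x) - (y - \<gamma> *\<^sub>R G y) = (1 - \<gamma> * \<mu>) *\<^sub>R (x - y) - \<gamma> *\<^sub>R \<delta>"
    by (simp add: \<delta>_def H_def algebra_simps)
  have "(norm ((x - \<gamma> *\<^sub>R G x) - (y - \<gamma> *\<^sub>R G y)))\<^sup>2
      = (1 - \<gamma> * \<mu>)\<^sup>2 * E - 2 * \<gamma> * (1 - \<gamma> * \<mu>) * t + \<gamma>\<^sup>2 * D"
    unfolding w norm_sq_diff_scaleR by (simp add: E_def D_def t_def inner_commute)
  also have "\<dots> \<le> (1 - \<gamma> * \<mu>)\<^sup>2 * E + \<gamma> * t * (\<gamma> * L + \<gamma> * \<mu> - 2)"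
    using mult_left_mono[OF coco, of "\<gamma>\<^sup>2"] by (simp add: power2_eq_square algebra_simps)
  also have "\<dots> \<le> max ((1 - \<gamma> * \<mu>)\<^sup>2) ((\<gamma> * L - 1)\<^sup>2) * E"
  proof (cases "\<gamma> * L + \<gamma> * \<mu> - 2 \<le> 0")
    case True
    then have "\<gamma> * t * (\<gamma> * L + \<gamma> * \<mu> - 2) \<le> 0"
      using t0 \<gamma> by (simp add: mult_nonneg_nonpos)
    moreover have "(1 - \<gamma> * \<mu>)\<^sup>2 * E \<le> max ((1 - \<gamma> * \<mu>)\<^sup>2) ((\<gamma> * L - 1)\<^sup>2) * E"
      by (intro mult_right_mono) (auto simp: E_def)
    ultimately show ?thesis by linarith
  next
    case False
    then have "\<gamma> * t * (\<gamma> * L + \<gamma> * \<mu> - 2) \<le> \<gamma> * ((L - \<mu>) * E) * (\<gamma> * L + \<gamma> * \<mu> - 2)"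
      using tE \<gamma> by (simp add: mult_right_mono)
    moreover have "(1 - \<gamma> * \<mu>)\<^sup>2 * E + \<gamma> * ((L - \<mu>) * E) * (\<gamma> * L + \<gamma> * \<mu> - 2) = (\<gamma> * L - 1)\<^sup>2 * E"
      by (simp add: algebra_simps power2_eq_square)
    moreover have "(\<gamma> * L - 1)\<^sup>2 * E \<le> max ((1 - \<gamma> * \<mu>)\<^sup>2) ((\<gamma> * L - 1)\<^sup>2) * E"
      by (intro mult_right_mono) (auto simp: E_def)
    ultimately show ?thesis by linarith
  qed
  finally show ?thesis unfolding E_def .
qed

lemma norm_sq_convex_comb:
  fixes x y :: "'a::real_inner"
  shows "(1 - a) * (norm x)\<^sup>2 + a * (norm y)\<^sup>2 - (norm ((1 - a) *\<^sub>R x + a *\<^sub>R y))\<^sup>2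
         = a * (1 - a) * (norm (x - y))\<^sup>2"
  unfolding power2_norm_eq_inner
  by (simp add: inner_add_left inner_add_right inner_diff_left inner_diff_right inner_commute
      algebra_simps power2_eq_square)

lemma strongly_convex_funD:
  fixes \<phi> :: "'a::real_inner \<Rightarrow> ereal"
  assumes sc: "strongly_convex_fun \<mu> \<phi>" and nm: "\<And>x. \<phi> x \<noteq> -\<infinity>"
    and fx: "\<phi> x = ereal vx" and fy: "\<phi> y = ereal vy" and a: "0 < a" "a < 1"
  obtains vz where "\<phi> ((1 - a) *\<^sub>R x + a *\<^sub>R y) = ereal vz"
    and "vz \<le> (1 - a) * vx + a * vy - \<mu> / 2 * (a * (1 - a) * (norm (x - y))\<^sup>2)"
proof -
  define z where "z = (1 - a) *\<^sub>R x + a *\<^sub>R y"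
  define q where "q = (\<lambda>x::'a. \<mu> / 2 * (norm x)\<^sup>2)"
  have "\<phi> z - ereal (q z) \<le> ereal (1 - a) * (\<phi> x - ereal (q x)) + ereal a * (\<phi> y - ereal (q y))"
    using sc a unfolding strongly_convex_fun_def convex_fun_def z_def q_def by blast
  then have le: "\<phi> z - ereal (q z) \<le> ereal ((1 - a) * (vx - q x) + a * (vy - q y))"
    by (simp add: fx fy)
  then obtain vz where vz: "\<phi> z = ereal vz"
    using nm[of z] by (cases "\<phi> z") auto
  have "(1 - a) * q x + a * q y - q z = \<mu> / 2 * ((1 - a) * (norm x)\<^sup>2 + a * (norm y)\<^sup>2 - (norm z)\<^sup>2)"
    unfolding q_def by (simp add: field_simps)
  then have "(1 - a) * q x + a * q y - q z = \<mu> / 2 * (a * (1 - a) * (norm (x - y))\<^sup>2)"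
    unfolding z_def norm_sq_convex_comb .
  with le vz have "vz \<le> (1 - a) * vx + a * vy - \<mu> / 2 * (a * (1 - a) * (norm (x - y))\<^sup>2)"
    by (simp add: algebra_simps)
  with vz show ?thesis using that unfolding z_def by blast
qed

lemma convex_fun_imp_strongly_convex_0: "convex_fun \<phi> \<Longrightarrow> strongly_convex_fun 0 \<phi>"
  unfolding strongly_convex_fun_def by (simp add: zero_ereal_def[symmetric])

locale strongly_convex_prox =
  fixes \<phi> :: "'a::euclidean_space \<Rightarrow> ereal" and \<gamma> \<mu> :: real
  assumes proper: "proper_fun \<phi>" and closed: "closed_fun \<phi>"
    and strongly_convex: "strongly_convex_fun \<mu> \<phi>"
    and nonneg: "0 \<le> \<mu>" and pos: "0 < \<gamma>"
begin

lemma not_MInfty: "\<phi> x \<noteq> -\<infinity>"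
  using proper unfolding proper_fun_def by blast

lemma real_of_ereal_eq: "\<phi> y \<noteq> \<infinity> \<Longrightarrow> \<phi> y = ereal (real_of_ereal (\<phi> y))"
  using not_MInfty[of y] by (cases "\<phi> y") auto

definition prox_obj :: "'a \<Rightarrow> 'a \<Rightarrow> real" where
  "prox_obj x y = \<gamma> * real_of_ereal (\<phi> y) + (norm (y - x))\<^sup>2 / 2"

definition is_prox :: "'a \<Rightarrow> 'a \<Rightarrow> bool" where
  "is_prox x p \<longleftrightarrow> (\<forall>y. ereal \<gamma> * \<phi> p + ereal ((norm (p - x))\<^sup>2 / 2)
                           \<le> ereal \<gamma> * \<phi> y + ereal ((norm (y - x))\<^sup>2 / 2))"

lemma prox_obj_strongly_convex:
  assumes "\<phi> y \<noteq> \<infinity>" "\<phi> z \<noteq> \<infinity>" "0 < a" "a < 1"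
  shows "\<phi> ((1 - a) *\<^sub>R y + a *\<^sub>R z) \<noteq> \<infinity>"
    and "prox_obj x ((1 - a) *\<^sub>R y + a *\<^sub>R z) \<le> (1 - a) * prox_obj x y + a * prox_obj x z
           - (1 + \<gamma> * \<mu>) / 2 * (a * (1 - a) * (norm (y - z))\<^sup>2)"
proof -
  obtain v where v: "\<phi> ((1 - a) *\<^sub>R y + a *\<^sub>R z) = ereal v"
    and le: "v \<le> (1 - a) * real_of_ereal (\<phi> y) + a * real_of_ereal (\<phi> z)
                 - \<mu> / 2 * (a * (1 - a) * (norm (y - z))\<^sup>2)"
    using strongly_convex_funD[OF strongly_convex not_MInfty real_of_ereal_eq[OF assms(1)]
        real_of_ereal_eq[OF assms(2)] assms(3,4)] .
  then show "\<phi> ((1 - a) *\<^sub>R y + a *\<^sub>R z) \<noteq> \<infinity>" by simp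
  define N where "N = a * (1 - a) * (norm (y - z))\<^sup>2"
  have "(1 - a) * (norm (y - x))\<^sup>2 + a * (norm (z - x))\<^sup>2
        - (norm ((1 - a) *\<^sub>R y + a *\<^sub>R z - x))\<^sup>2 = N"
    using norm_sq_convex_comb[of a "y - x" "z - x"] unfolding N_def by (simp add: algebra_simps)
  moreover have "\<gamma> * v \<le> \<gamma> * ((1 - a) * real_of_ereal (\<phi> y) + a * real_of_ereal (\<phi> z) - \<mu> / 2 * N)"
    using le pos unfolding N_def by (simp add: mult_left_mono)
  ultimately show "prox_obj x ((1 - a) *\<^sub>R y + a *\<^sub>R z) \<le> (1 - a) * prox_obj x y + a * prox_obj x z
           - (1 + \<gamma> * \<mu>) / 2 * (a * (1 - a) * (norm (y - z))\<^sup>2)"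
    unfolding prox_obj_def v N_def[symmetric] by (simp add: algebra_simps add_divide_distrib diff_divide_distrib)
qed

lemma ereal_prox_obj:
  "\<phi> y \<noteq> \<infinity> \<Longrightarrow> ereal \<gamma> * \<phi> y + ereal ((norm (y - x))\<^sup>2 / 2) = ereal (prox_obj x y)"
  unfolding prox_obj_def by (subst real_of_ereal_eq) auto

lemma is_prox_iff: "is_prox x p \<longleftrightarrow> \<phi> p \<noteq> \<infinity> \<and> (\<forall>y. \<phi> y \<noteq> \<infinity> \<longrightarrow> prox_obj x p \<le> prox_obj x y)"
proof
  assume m: "is_prox x p"
  obtain y0 where y0: "\<phi> y0 \<noteq> \<infinity>" using proper unfolding proper_fun_def by blast
  have "ereal \<gamma> * \<phi> p + ereal ((norm (p - x))\<^sup>2 / 2) \<le> ereal (prox_obj x y0)"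
    using m unfolding is_prox_def ereal_prox_obj[OF y0, symmetric] by blast
  then have pfin: "\<phi> p \<noteq> \<infinity>" using pos by auto
  moreover have "prox_obj x p \<le> prox_obj x y" if "\<phi> y \<noteq> \<infinity>" for y
    using m that pfin unfolding is_prox_def by (metis ereal_less_eq(3) ereal_prox_obj)
  ultimately show "\<phi> p \<noteq> \<infinity> \<and> (\<forall>y. \<phi> y \<noteq> \<infinity> \<longrightarrow> prox_obj x p \<le> prox_obj x y)" by blast
next
  assume a: "\<phi> p \<noteq> \<infinity> \<and> (\<forall>y. \<phi> y \<noteq> \<infinity> \<longrightarrow> prox_obj x p \<le> prox_obj x y)"
  show "is_prox x p" unfolding is_prox_def
  proof
    fix y
    show "ereal \<gamma> * \<phi> p + ereal ((norm (p - x))\<^sup>2 / 2) \<le> ereal \<gamma> * \<phi> y + ereal ((norm (y - x))\<^sup>2 / 2)"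
      using a pos by (cases "\<phi> y = \<infinity>") (simp_all add: ereal_prox_obj)
  qed
qed

lemma closed_prox_obj_sublevel: "closed {y. \<phi> y \<noteq> \<infinity> \<and> prox_obj x y \<le> c}"
proof -
  have eq: "{y. \<phi> y \<noteq> \<infinity> \<and> prox_obj x y \<le> c}
      = (\<lambda>y. (y, (c - (norm (y - x))\<^sup>2 / 2) / \<gamma>)) -` {(y, t::real). \<phi> y \<le> ereal t}"
  proof (rule set_eqI)
    fix y
    show "y \<in> {y. \<phi> y \<noteq> \<infinity> \<and> prox_obj x y \<le> c} \<longleftrightarrow>
          y \<in> (\<lambda>y. (y, (c - (norm (y - x))\<^sup>2 / 2) / \<gamma>)) -` {(y, t::real). \<phi> y \<le> ereal t}"
    proof (cases "\<phi> y")
      case (real r)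
      then show ?thesis using pos by (simp add: prox_obj_def pos_le_divide_eq field_simps)
    qed (use not_MInfty in auto)
  qed
  have "closed {(y, t::real). \<phi> y \<le> ereal t}" using closed unfolding closed_fun_def .
  then show ?thesis unfolding eq
    by (rule continuous_closed_vimage) (use pos in \<open>auto intro!: continuous_intros\<close>)
qed

text \<open>Lower semicontinuity keeps \<open>prox_obj x\<close> above \<open>prox_obj x y0 - 1\<close> near \<open>y0\<close>, whereas
  strong convexity pushes it below that value on the segment from \<open>y0\<close> towards any far
  point of the sublevel set.\<close>

lemma bounded_prox_obj_sublevel:
  assumes y0: "\<phi> y0 \<noteq> \<infinity>"
  shows "bounded {y. \<phi> y \<noteq> \<infinity> \<and> prox_obj x y \<le> prox_obj x y0}"
proof -
  define f0 where "f0 = prox_obj x y0"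
  obtain \<delta> where \<delta>: "\<delta> > 0" and low: "\<And>z. \<phi> z \<noteq> \<infinity> \<Longrightarrow> dist y0 z < \<delta> \<Longrightarrow> f0 - 1 < prox_obj x z"
  proof -
    have "open (- {y. \<phi> y \<noteq> \<infinity> \<and> prox_obj x y \<le> f0 - 1})"
      using closed_prox_obj_sublevel by (simp add: open_Compl)
    moreover have "y0 \<in> - {y. \<phi> y \<noteq> \<infinity> \<and> prox_obj x y \<le> f0 - 1}" unfolding f0_def by simp
    ultimately obtain \<delta> where "\<delta> > 0" "ball y0 \<delta> \<subseteq> - {y. \<phi> y \<noteq> \<infinity> \<and> prox_obj x y \<le> f0 - 1}"
      by (meson open_contains_ball)
    with that show ?thesis by force
  qed
  have "norm (y - y0) \<le> \<delta> + 8 / \<delta>" if y: "\<phi> y \<noteq> \<infinity>" "prox_obj x y \<le> f0" for y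
  proof (rule ccontr)
    define R where "R = norm (y - y0)"
    define a where "a = \<delta> / (2 * R)"
    assume "\<not> norm (y - y0) \<le> \<delta> + 8 / \<delta>"
    then have R: "R \<ge> 8 / \<delta>" "R > \<delta>" using \<delta> unfolding R_def
      by (smt (verit, best) divide_pos_pos)+
    then have a: "0 < a" "a < 1 / 2" "a * R = \<delta> / 2" unfolding a_def using \<delta> by (auto simp: field_simps)
    define z where "z = (1 - a) *\<^sub>R y0 + a *\<^sub>R y"
    have "dist y0 z = a * R"
      unfolding z_def dist_norm R_def using a
      by (simp add: algebra_simps flip: scaleR_diff_right) (simp add: norm_minus_commute)
    then have "f0 - 1 < prox_obj x z"
      using low prox_obj_strongly_convex(1)[OF y0 y(1), of a] a \<delta> unfolding z_def by simp
    also have "\<dots> \<le> (1 - a) * f0 + a * f0 - (1 + \<gamma> * \<mu>) / 2 * (a * (1 - a) * R\<^sup>2)"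
    proof -
      have "norm (y0 - y) = R" by (simp add: R_def norm_minus_commute)
      then have "prox_obj x z \<le> (1 - a) * f0 + a * prox_obj x y - (1 + \<gamma> * \<mu>) / 2 * (a * (1 - a) * R\<^sup>2)"
        using prox_obj_strongly_convex(2)[OF y0 y(1), of a x] a unfolding z_def f0_def by simp
      moreover have "a * prox_obj x y \<le> a * f0" using y(2) a by (simp add: mult_left_mono)
      ultimately show ?thesis by linarith
    qed
    also have "\<dots> \<le> f0 - 1"
    proof -
      have "\<delta> / 2 * (R / 2) \<le> (a * R) * ((1 - a) * R)"
        using a R \<delta> by (intro mult_mono) (auto simp: algebra_simps)
      also have "\<dots> = a * (1 - a) * R\<^sup>2" by (simp add: power2_eq_square)
      finally have "2 \<le> a * (1 - a) * R\<^sup>2" using R \<delta> by (simp add: field_simps)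
      moreover have "1 \<le> 1 + \<gamma> * \<mu>" using pos nonneg by simp
      ultimately have "1 / 2 * 2 \<le> (1 + \<gamma> * \<mu>) / 2 * (a * (1 - a) * R\<^sup>2)"
        by (intro mult_mono) auto
      then show ?thesis by (simp add: algebra_simps)
    qed
    finally show False by simp
  qed
  then show ?thesis
    by (intro bounded_subset[OF bounded_cball[of y0 "\<delta> + 8 / \<delta>"]])
       (auto simp: f0_def dist_norm norm_minus_commute)
qed

lemma ex_is_prox: "\<exists>p. is_prox x p"
proof -
  obtain y0 where y0: "\<phi> y0 \<noteq> \<infinity>" using proper unfolding proper_fun_def by blast
  define S where "S = {y. \<phi> y \<noteq> \<infinity> \<and> prox_obj x y \<le> prox_obj x y0}"
  have "compact S"
    unfolding S_def compact_eq_bounded_closed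
    using bounded_prox_obj_sublevel[OF y0] closed_prox_obj_sublevel by blast
  then have "S \<inter> (\<Inter>z\<in>S. {y. \<phi> y \<noteq> \<infinity> \<and> prox_obj x y \<le> prox_obj x z}) \<noteq> {}"
  proof (rule compact_imp_fip_image)
    fix I assume I: "finite I" "I \<subseteq> S"
    show "S \<inter> (\<Inter>z\<in>I. {y. \<phi> y \<noteq> \<infinity> \<and> prox_obj x y \<le> prox_obj x z}) \<noteq> {}"
    proof (cases "I = {}")
      case True then show ?thesis using y0 by (auto simp: S_def)
    next
      case False
      with I(1) have "Min (prox_obj x ` I) \<in> prox_obj x ` I" by simp
      then obtain m where "m \<in> I" "prox_obj x m = Min (prox_obj x ` I)" by auto
      with I show ?thesis unfolding S_def by auto
    qed
  qed (rule closed_prox_obj_sublevel)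
  then obtain p where "p \<in> S" "\<And>z. z \<in> S \<Longrightarrow> prox_obj x p \<le> prox_obj x z" by blast
  then have "is_prox x p" unfolding is_prox_iff S_def by force
  then show ?thesis ..
qed

lemma is_prox_unique:
  assumes p: "is_prox x p" and q: "is_prox x q" shows "p = q"
proof (rule ccontr)
  assume "p \<noteq> q"
  then have pos_sq: "0 < (1 + \<gamma> * \<mu>) / 2 * (1 / 2 * (1 - 1 / 2) * (norm (p - q))\<^sup>2)"
    using pos nonneg by (simp add: add_pos_nonneg)
  have "\<phi> p \<noteq> \<infinity>" "\<phi> q \<noteq> \<infinity>" and min: "\<And>y. \<phi> y \<noteq> \<infinity> \<Longrightarrow> prox_obj x p \<le> prox_obj x y"
    and "prox_obj x q \<le> prox_obj x p"
    using p q unfolding is_prox_iff by auto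
  with prox_obj_strongly_convex(1)[of p q "1 / 2"] prox_obj_strongly_convex(2)[of p q "1 / 2" x] pos_sq
  show False by fastforce
qed

lemma is_prox_prox: "is_prox x (prox \<gamma> \<phi> x)"
proof -
  have "\<exists>!p. is_prox x p" using ex_is_prox is_prox_unique by blast
  then show ?thesis unfolding prox_def is_prox_def[symmetric] by (rule theI')
qed

lemma prox_eqI: "is_prox x p \<Longrightarrow> prox \<gamma> \<phi> x = p"
  using is_prox_unique is_prox_prox by blast

lemma prox_obj_quadratic_growth:
  assumes p: "is_prox x p" and y: "\<phi> y \<noteq> \<infinity>"
  shows "prox_obj x p + (1 + \<gamma> * \<mu>) / 2 * (norm (y - p))\<^sup>2 \<le> prox_obj x y"
proof -
  have pf: "\<phi> p \<noteq> \<infinity>" and min: "\<And>y. \<phi> y \<noteq> \<infinity> \<Longrightarrow> prox_obj x p \<le> prox_obj x y"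
    using p unfolding is_prox_iff by auto
  define c where "c = (1 + \<gamma> * \<mu>) / 2 * (norm (y - p))\<^sup>2"
  define G where "G = prox_obj x y - prox_obj x p"
  have key: "(1 - a) * c \<le> G" if a: "0 < a" "a < 1" for a
  proof -
    have "prox_obj x p \<le> (1 - a) * prox_obj x p + a * prox_obj x y
        - (1 + \<gamma> * \<mu>) / 2 * (a * (1 - a) * (norm (p - y))\<^sup>2)"
      using prox_obj_strongly_convex[OF pf y a] min by (meson order_trans)
    moreover have "(1 + \<gamma> * \<mu>) / 2 * (a * (1 - a) * (norm (p - y))\<^sup>2) = a * ((1 - a) * c)"
      unfolding c_def by (simp add: norm_minus_commute)
    moreover have "(1 - a) * prox_obj x p + a * prox_obj x y = prox_obj x p + a * G"
      unfolding G_def by (simp add: algebra_simps)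
    ultimately have "a * ((1 - a) * c) \<le> a * G" by linarith
    then show ?thesis using a by simp
  qed
  have "c \<le> G"
  proof (rule field_le_mult_one_interval)
    fix z :: real assume "0 < z" "z < 1"
    then show "z * c \<le> G" using key[of "1 - z"] by simp
  qed
  then show ?thesis unfolding c_def G_def by simp
qed

lemma prox_in_subdiff: "(1 / \<gamma>) *\<^sub>R (x - prox \<gamma> \<phi> x) \<in> subdiff \<phi> (prox \<gamma> \<phi> x)"
proof -
  define p where "p = prox \<gamma> \<phi> x"
  have p: "is_prox x p" unfolding p_def by (rule is_prox_prox)
  then have pf: "\<phi> p \<noteq> \<infinity>" unfolding is_prox_iff by auto
  have "\<phi> p + ereal (((1 / \<gamma>) *\<^sub>R (x - p)) \<bullet> (y - p)) \<le> \<phi> y" for y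
  proof (cases "\<phi> y = \<infinity>")
    case False
    have "1 / 2 * (norm (y - p))\<^sup>2 \<le> (1 + \<gamma> * \<mu>) / 2 * (norm (y - p))\<^sup>2"
      using pos nonneg by (intro mult_right_mono) auto
    with prox_obj_quadratic_growth[OF p False]
    have "prox_obj x p + 1 / 2 * (norm (y - p))\<^sup>2 \<le> prox_obj x y" by linarith
    moreover have "(norm (y - x))\<^sup>2 = (norm (p - x))\<^sup>2 + (norm (y - p))\<^sup>2 - 2 * ((x - p) \<bullet> (y - p))"
      by (simp add: power2_norm_eq_inner inner_diff_left inner_diff_right inner_commute)
    ultimately have "\<gamma> * real_of_ereal (\<phi> p) + (x - p) \<bullet> (y - p) \<le> \<gamma> * real_of_ereal (\<phi> y)"
      unfolding prox_obj_def ring_distribs add_divide_distrib by linarith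
    then have "real_of_ereal (\<phi> p) + (1 / \<gamma>) * ((x - p) \<bullet> (y - p)) \<le> real_of_ereal (\<phi> y)"
      using pos by (simp add: field_simps)
    then show ?thesis by (subst real_of_ereal_eq[OF pf], subst real_of_ereal_eq[OF False]) simp
  qed simp
  then show ?thesis unfolding subdiff_def p_def[symmetric] using pf by (simp add: less_top)
qed

lemma prox_strongly_monotone:
  "(1 + \<gamma> * \<mu>) * (norm (prox \<gamma> \<phi> x - prox \<gamma> \<phi> x'))\<^sup>2
     \<le> (prox \<gamma> \<phi> x - prox \<gamma> \<phi> x') \<bullet> (x - x')"
proof -
  define p where "p = prox \<gamma> \<phi> x"
  define q where "q = prox \<gamma> \<phi> x'"
  have p: "is_prox x p" and q: "is_prox x' q" unfolding p_def q_def by (rule is_prox_prox)+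
  then have pf: "\<phi> p \<noteq> \<infinity>" and qf: "\<phi> q \<noteq> \<infinity>" unfolding is_prox_iff by auto
  define k where "k = (1 + \<gamma> * \<mu>) * (norm (p - q))\<^sup>2"
  have "prox_obj x p + k / 2 \<le> prox_obj x q"
    using prox_obj_quadratic_growth[OF p qf] by (simp add: k_def norm_minus_commute)
  moreover have "prox_obj x' q + k / 2 \<le> prox_obj x' p"
    using prox_obj_quadratic_growth[OF q pf] by (simp add: k_def)
  ultimately have "2 * k \<le> (norm (q - x))\<^sup>2 - (norm (p - x))\<^sup>2 + (norm (p - x'))\<^sup>2 - (norm (q - x'))\<^sup>2"
    unfolding prox_obj_def by linarith
  also have "\<dots> = 2 * ((p - q) \<bullet> (x - x'))"
    unfolding power2_norm_eq_inner by (simp add: inner_diff_left inner_diff_right inner_commute)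
  finally show ?thesis unfolding k_def p_def q_def by simp
qed

lemma prox_nonexpansive: "norm (prox \<gamma> \<phi> x - prox \<gamma> \<phi> x') \<le> norm (x - x')"
proof -
  define d where "d = prox \<gamma> \<phi> x - prox \<gamma> \<phi> x'"
  have "norm d * norm d \<le> (1 + \<gamma> * \<mu>) * (norm d)\<^sup>2"
    using mult_right_mono[of 1 "1 + \<gamma> * \<mu>" "(norm d)\<^sup>2"] pos nonneg by (simp add: power2_eq_square)
  also have "\<dots> \<le> d \<bullet> (x - x')" unfolding d_def by (rule prox_strongly_monotone)
  also have "\<dots> \<le> norm d * norm (x - x')" by (rule norm_cauchy_schwarz)
  finally show ?thesis unfolding d_def[symmetric]
    by (cases "norm d = 0") (simp_all add: mult_le_cancel_left_pos)
qed

lemma continuous_on_prox: "continuous_on UNIV (prox \<gamma> \<phi>)"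
  by (rule lipschitz_on_continuous_on[where L = 1]) (simp add: lipschitz_on_def dist_norm prox_nonexpansive)

lemma prox_subdiff_fixpoint:
  assumes "s \<in> subdiff \<phi> z"
  shows "prox \<gamma> \<phi> (z + \<gamma> *\<^sub>R s) = z"
proof (rule prox_eqI)
  have zf: "\<phi> z \<noteq> \<infinity>" and sg: "\<And>y. \<phi> z + ereal (s \<bullet> (y - z)) \<le> \<phi> y"
    using assms unfolding subdiff_def by auto
  show "is_prox (z + \<gamma> *\<^sub>R s) z" unfolding is_prox_iff
  proof (intro conjI allI impI zf)
    fix y assume yf: "\<phi> y \<noteq> \<infinity>"
    have "real_of_ereal (\<phi> z) + s \<bullet> (y - z) \<le> real_of_ereal (\<phi> y)"
      using sg[of y] by (subst (asm) real_of_ereal_eq[OF zf], subst (asm) real_of_ereal_eq[OF yf]) simp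
    then have "\<gamma> * real_of_ereal (\<phi> z) + \<gamma> * (s \<bullet> (y - z)) \<le> \<gamma> * real_of_ereal (\<phi> y)"
      using pos by (metis distrib_left mult_le_cancel_left_pos)
    moreover have "(norm (y - (z + \<gamma> *\<^sub>R s)))\<^sup>2
        = (norm (y - z))\<^sup>2 - 2 * \<gamma> * (s \<bullet> (y - z)) + \<gamma>\<^sup>2 * (norm s)\<^sup>2"
      unfolding power2_norm_eq_inner
      by (simp add: inner_diff_left inner_diff_right inner_add_left inner_add_right inner_commute
          algebra_simps power2_eq_square)
    moreover have "(norm (z - (z + \<gamma> *\<^sub>R s)))\<^sup>2 = \<gamma>\<^sup>2 * (norm s)\<^sup>2"
      by (simp add: power_mult_distrib)
    ultimately show "prox_obj (z + \<gamma> *\<^sub>R s) z \<le> prox_obj (z + \<gamma> *\<^sub>R s) y"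
      unfolding prox_obj_def using zero_le_power2[of "norm (y - z)"] by linarith
  qed
qed

end

lemma conjugate_ge: "ereal (x \<bullet> y) - \<phi> x \<le> conjugate \<phi> y"
  unfolding conjugate_def by (rule SUP_upper) simp

lemma conjugate_not_MInfty:
  assumes "proper_fun \<phi>" shows "conjugate \<phi> y \<noteq> -\<infinity>"
proof -
  obtain x where "\<phi> x \<noteq> \<infinity>" "\<phi> x \<noteq> -\<infinity>" using assms unfolding proper_fun_def by blast
  then have "ereal (x \<bullet> y) - \<phi> x \<noteq> -\<infinity>" by (cases "\<phi> x") auto
  with conjugate_ge[of x y \<phi>] show ?thesis by auto
qed

lemma closed_fun_conjugate:
  fixes \<phi> :: "'a::euclidean_space \<Rightarrow> ereal"
  assumes "proper_fun \<phi>" shows "closed_fun (conjugate \<phi>)"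
proof -
  have nm: "\<phi> x \<noteq> -\<infinity>" for x using assms unfolding proper_fun_def by blast
  have eq: "{(y, t::real). conjugate \<phi> y \<le> ereal t} = (\<Inter>x. {(y, t). ereal (x \<bullet> y) - \<phi> x \<le> ereal t})"
    unfolding conjugate_def by (auto simp: SUP_le_iff)
  have "closed {(y, t::real). ereal (x \<bullet> y) - \<phi> x \<le> ereal t}" for x
  proof (cases "\<phi> x")
    case (real r)
    then have "{(y, t::real). ereal (x \<bullet> y) - \<phi> x \<le> ereal t} = {p. x \<bullet> fst p - r \<le> snd p}" by auto
    then show ?thesis by (simp add: closed_Collect_le continuous_intros)
  qed (use nm in auto)
  then show ?thesis unfolding closed_fun_def eq by (intro closed_INT) auto
qed

lemma convex_fun_conjugate:
  fixes \<phi> :: "'a::real_inner \<Rightarrow> ereal"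
  assumes nm: "\<And>x. \<phi> x \<noteq> -\<infinity>"
  shows "convex_fun (conjugate \<phi>)"
  unfolding convex_fun_def
proof (intro allI impI)
  fix a b and t :: real assume t: "0 < t \<and> t < 1"
  show "conjugate \<phi> ((1 - t) *\<^sub>R a + t *\<^sub>R b) \<le> ereal (1 - t) * conjugate \<phi> a + ereal t * conjugate \<phi> b"
    unfolding conjugate_def[of \<phi> "(1 - t) *\<^sub>R a + t *\<^sub>R b"]
  proof (rule SUP_least)
    fix x
    show "ereal (x \<bullet> ((1 - t) *\<^sub>R a + t *\<^sub>R b)) - \<phi> x \<le> ereal (1 - t) * conjugate \<phi> a + ereal t * conjugate \<phi> b"
    proof (cases "\<phi> x")
      case (real r)
      have "ereal (x \<bullet> ((1 - t) *\<^sub>R a + t *\<^sub>R b)) - \<phi> x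
          = ereal (1 - t) * (ereal (x \<bullet> a) - \<phi> x) + ereal t * (ereal (x \<bullet> b) - \<phi> x)"
        using real by (simp add: inner_add_right algebra_simps)
      also have "\<dots> \<le> ereal (1 - t) * conjugate \<phi> a + ereal t * conjugate \<phi> b"
        using t by (intro add_mono ereal_mult_left_mono conjugate_ge) auto
      finally show ?thesis .
    qed (use nm in auto)
  qed
qed

lemma conjugate_subdiff_eq:
  assumes s: "s \<in> subdiff \<phi> x" and nm: "\<phi> x \<noteq> -\<infinity>"
  shows "conjugate \<phi> s = ereal (x \<bullet> s) - \<phi> x"
proof (rule antisym)
  from s have xf: "\<phi> x \<noteq> \<infinity>" and sg: "\<And>y. \<phi> x + ereal (s \<bullet> (y - x)) \<le> \<phi> y"
    unfolding subdiff_def by auto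
  then obtain r where r: "\<phi> x = ereal r" using nm by (cases "\<phi> x") auto
  show "conjugate \<phi> s \<le> ereal (x \<bullet> s) - \<phi> x"
    unfolding conjugate_def
  proof (rule SUP_least)
    fix y
    show "ereal (y \<bullet> s) - \<phi> y \<le> ereal (x \<bullet> s) - \<phi> x"
    proof (cases "\<phi> y")
      case (real ry)
      with sg[of y] r have "r + s \<bullet> (y - x) \<le> ry" by simp
      with real r show ?thesis by (simp add: inner_diff_right inner_commute)
    qed (use sg[of y] r in auto)
  qed
qed (rule conjugate_ge)

lemma subdiff_monotone:
  assumes a: "a \<in> subdiff \<phi> x" and b: "b \<in> subdiff \<phi> y" and nm: "\<And>z. \<phi> z \<noteq> -\<infinity>"
  shows "0 \<le> (a - b) \<bullet> (x - y)"
proof -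
  from a b have "\<phi> x \<noteq> \<infinity>" "\<phi> y \<noteq> \<infinity>"
    and sa: "\<phi> x + ereal (a \<bullet> (y - x)) \<le> \<phi> y" and sb: "\<phi> y + ereal (b \<bullet> (x - y)) \<le> \<phi> x"
    unfolding subdiff_def by auto
  then obtain rx ry where "\<phi> x = ereal rx" "\<phi> y = ereal ry" using nm by (metis ereal_cases)
  with sa sb have "a \<bullet> (y - x) + b \<bullet> (x - y) \<le> 0" by simp
  then show ?thesis by (simp add: inner_diff_left inner_diff_right algebra_simps)
qed

text \<open>By Moreau's decomposition \<open>p = prox h (z + u)\<close> and \<open>s = z + u - p\<close> satisfy \<open>s \<in> \<partial>h p\<close> and
  \<open>p \<in> \<partial>h\<^sup>* s\<close>; monotonicity of \<open>\<partial>h\<^sup>*\<close> against \<open>z \<in> \<partial>h\<^sup>* u\<close> then forces \<open>p = z\<close>.\<close>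

lemma subdiff_conjugate_imp_subdiff:
  fixes h :: "'a::euclidean_space \<Rightarrow> ereal"
  assumes pr: "proper_fun h" and cl: "closed_fun h" and cv: "convex_fun h"
    and z: "z \<in> subdiff (conjugate h) u"
  shows "u \<in> subdiff h z"
proof -
  interpret P: strongly_convex_prox h 1 0
    using pr cl convex_fun_imp_strongly_convex_0[OF cv] by unfold_locales auto
  define p where "p = prox 1 h (z + u)"
  define s where "s = z + u - p"
  have sp: "s \<in> subdiff h p" using P.prox_in_subdiff[of "z + u"] unfolding p_def s_def by simp
  then have hp: "h p \<noteq> \<infinity>" unfolding subdiff_def by auto
  have cs: "conjugate h s = ereal (p \<bullet> s) - h p" by (rule conjugate_subdiff_eq[OF sp P.not_MInfty])
  have "p \<in> subdiff (conjugate h) s"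
    unfolding subdiff_def
  proof (intro CollectI conjI allI)
    show "conjugate h s < \<infinity>" using cs hp P.not_MInfty[of p] by (cases "h p") auto
    fix v
    have "conjugate h s + ereal (p \<bullet> (v - s)) = ereal (p \<bullet> v) - h p"
      unfolding cs using hp P.not_MInfty[of p] by (cases "h p") (auto simp: inner_diff_right)
    with conjugate_ge[of p v h] show "conjugate h s + ereal (p \<bullet> (v - s)) \<le> conjugate h v" by simp
  qed
  from subdiff_monotone[OF z this conjugate_not_MInfty[OF pr]]
  have "0 \<le> - ((z - p) \<bullet> (z - p))"
    unfolding s_def by (simp add: inner_diff_right inner_diff_left inner_commute algebra_simps)
  then have "z = p" using inner_ge_zero[of "z - p"] by simp
  with sp show ?thesis unfolding s_def by simp
qed

lemma subdiff_add_smooth: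
  fixes f :: "'a::real_inner \<Rightarrow> real"
  assumes cf: "convex_on UNIV f" and df: "\<And>y. (f has_derivative (\<lambda>d. G y \<bullet> d)) (at y)"
    and s: "s \<in> subdiff g x" and gnm: "\<And>y. g y \<noteq> -\<infinity>"
  shows "G x + s \<in> subdiff (\<lambda>y. ereal (f y) + g y) x"
proof -
  from s have "g x \<noteq> \<infinity>" and sg: "\<And>y. g x + ereal (s \<bullet> (y - x)) \<le> g y"
    unfolding subdiff_def by auto
  then obtain r where r: "g x = ereal r" using gnm by (cases "g x") auto
  show ?thesis unfolding subdiff_def
  proof (intro CollectI conjI allI)
    fix y
    show "ereal (f x) + g x + ereal ((G x + s) \<bullet> (y - x)) \<le> ereal (f y) + g y"
    proof (cases "g y")
      case (real ry)
      have "f x + G x \<bullet> (y - x) \<le> f y" by (rule convex_on_gradient_ineq[OF cf df])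
      moreover have "r + s \<bullet> (y - x) \<le> ry" using sg[of y] r real by simp
      ultimately show ?thesis using r real by (simp add: inner_add_left)
    qed (use gnm in auto)
  qed (simp add: r)
qed

lemma ereal_add_le_add_opposite:
  fixes a b a' b' :: ereal
  assumes "a + ereal c \<le> b" and "a' + ereal (- c) \<le> b'"
  shows "a + a' \<le> b + b'"
proof -
  have "(a + ereal c) + (a' + ereal (- c)) = (a + a') + (ereal c + ereal (- c))"
    by (simp only: ac_simps)
  also have "\<dots> = a + a'" by (simp add: zero_ereal_def[symmetric])
  finally have "(a + ereal c) + (a' + ereal (- c)) = a + a'" .
  with add_mono[OF assms] show ?thesis by simp
qed

lemma kkt_imp_primal_min:
  fixes K :: "'x::euclidean_space \<Rightarrow> 'u::euclidean_space"
    and f :: "'x \<Rightarrow> real" and g :: "'x \<Rightarrow> ereal" and h :: "'u \<Rightarrow> ereal"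
  assumes lin: "linear K"
    and cf: "convex_on UNIV f" and df: "\<And>y. (f has_derivative (\<lambda>d. gradf y \<bullet> d)) (at y)"
    and gnm: "\<And>y. g y \<noteq> -\<infinity>"
    and xa: "- gradf xa - adjoint K ua \<in> subdiff g xa" and ua: "ua \<in> subdiff h (K xa)"
  shows "ereal (f xa) + g xa + h (K xa) \<le> ereal (f y) + g y + h (K y)"
proof -
  have "- adjoint K ua \<in> subdiff (\<lambda>y. ereal (f y) + g y) xa"
    using subdiff_add_smooth[OF cf df xa gnm] by simp
  then have "ereal (f xa) + g xa + ereal ((- adjoint K ua) \<bullet> (y - xa)) \<le> ereal (f y) + g y"
    unfolding subdiff_def by blast
  moreover have "h (K xa) + ereal (ua \<bullet> (K y - K xa)) \<le> h (K y)"
    using ua unfolding subdiff_def by blast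
  moreover have "ua \<bullet> (K y - K xa) = - ((- adjoint K ua) \<bullet> (y - xa))"
    by (simp add: adjoint_works[OF lin] linear_diff[OF lin] inner_commute)
  ultimately show ?thesis using ereal_add_le_add_opposite by (metis add.assoc)
qed

lemma kkt_imp_dual_min:
  fixes K :: "'x::euclidean_space \<Rightarrow> 'u::euclidean_space"
    and f :: "'x \<Rightarrow> real" and g :: "'x \<Rightarrow> ereal" and h :: "'u \<Rightarrow> ereal"
  assumes lin: "linear K"
    and cf: "convex_on UNIV f" and df: "\<And>y. (f has_derivative (\<lambda>d. gradf y \<bullet> d)) (at y)"
    and gnm: "\<And>y. g y \<noteq> -\<infinity>" and hnm: "\<And>y. h y \<noteq> -\<infinity>"
    and xa: "- gradf xa - adjoint K ua \<in> subdiff g xa" and ua: "ua \<in> subdiff h (K xa)"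
  defines "D \<equiv> \<lambda>v. conjugate (\<lambda>y. ereal (f y) + g y) (- adjoint K v) + conjugate h v"
  shows "D ua = - (ereal (f xa) + g xa + h (K xa))" and "D ua \<le> D v"
proof -
  define fg where "fg = (\<lambda>y. ereal (f y) + g y)"
  have "g xa \<noteq> \<infinity>" "h (K xa) \<noteq> \<infinity>" using xa ua unfolding subdiff_def by auto
  then obtain gx hx where gx: "g xa = ereal gx" and hx: "h (K xa) = ereal hx"
    using gnm[of xa] hnm[of "K xa"] by (cases "g xa"; cases "h (K xa)") auto
  have fgx: "fg xa = ereal (f xa + gx)" by (simp add: fg_def gx)
  have adj: "xa \<bullet> adjoint K w = K xa \<bullet> w" for w by (rule adjoint_works[OF lin])
  have "- adjoint K ua \<in> subdiff fg xa"
    using subdiff_add_smooth[OF cf df xa gnm] unfolding fg_def by simp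
  then have "D ua = (ereal (xa \<bullet> (- adjoint K ua)) - fg xa) + (ereal (K xa \<bullet> ua) - h (K xa))"
    unfolding D_def fg_def[symmetric]
    using conjugate_subdiff_eq[of _ fg xa] conjugate_subdiff_eq[OF ua hnm] fgx by simp
  then have Dua: "D ua = ereal (- (f xa + gx + hx))" by (simp add: fgx hx adj)
  then show "D ua = - (ereal (f xa) + g xa + h (K xa))" by (simp add: gx hx)
  have "(ereal (xa \<bullet> (- adjoint K v)) - fg xa) + (ereal (K xa \<bullet> v) - h (K xa)) \<le> D v"
    unfolding D_def fg_def[symmetric] by (intro add_mono conjugate_ge)
  moreover have "(ereal (xa \<bullet> (- adjoint K v)) - fg xa) + (ereal (K xa \<bullet> v) - h (K xa)) = D ua"
    by (simp add: Dua fgx hx adj algebra_simps)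
  ultimately show "D ua \<le> D v" by simp
qed

lemma strongly_convex_fun_ereal:
  fixes f :: "'a::real_normed_vector \<Rightarrow> real"
  assumes "convex_on UNIV (\<lambda>y. f y - \<mu> / 2 * (norm y)\<^sup>2)"
  shows "strongly_convex_fun \<mu> (\<lambda>y. ereal (f y))"
  unfolding strongly_convex_fun_def convex_fun_def
proof (intro allI impI)
  fix x y :: 'a and a :: real
  assume "0 < a \<and> a < 1"
  then have "f ((1 - a) *\<^sub>R x + a *\<^sub>R y) - \<mu> / 2 * (norm ((1 - a) *\<^sub>R x + a *\<^sub>R y))\<^sup>2
      \<le> (1 - a) * (f x - \<mu> / 2 * (norm x)\<^sup>2) + a * (f y - \<mu> / 2 * (norm y)\<^sup>2)"
    using convex_onD[OF assms, of a x y] by simp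
  then show "ereal (f ((1 - a) *\<^sub>R x + a *\<^sub>R y)) - ereal (\<mu> / 2 * (norm ((1 - a) *\<^sub>R x + a *\<^sub>R y))\<^sup>2)
      \<le> ereal (1 - a) * (ereal (f x) - ereal (\<mu> / 2 * (norm x)\<^sup>2))
         + ereal a * (ereal (f y) - ereal (\<mu> / 2 * (norm y)\<^sup>2))"
    by simp
qed

lemma strongly_convex_fun_midpoint:
  fixes \<phi> :: "'a::real_inner \<Rightarrow> ereal"
  assumes "strongly_convex_fun \<mu> \<phi>" "\<And>x. \<phi> x \<noteq> -\<infinity>" "\<phi> x = ereal vx" "\<phi> y = ereal vy"
  obtains v where "\<phi> (midpoint x y) = ereal v" and "v \<le> vx / 2 + vy / 2 - \<mu> / 8 * (norm (x - y))\<^sup>2"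
proof -
  obtain v where "\<phi> ((1 - 1 / 2) *\<^sub>R x + (1 / 2) *\<^sub>R y) = ereal v"
    and "v \<le> (1 - 1 / 2) * vx + 1 / 2 * vy - \<mu> / 2 * (1 / 2 * (1 - 1 / 2) * (norm (x - y))\<^sup>2)"
    by (rule strongly_convex_funD[OF assms, of "1 / 2"]) auto
  moreover have "(1 - 1 / 2) *\<^sub>R x + (1 / 2) *\<^sub>R y = midpoint x y"
    by (simp add: midpoint_def scaleR_right_distrib)
  ultimately show ?thesis using that by simp
qed

lemma primal_midpoint_lt:
  fixes K :: "'x::euclidean_space \<Rightarrow> 'u::euclidean_space"
    and f :: "'x \<Rightarrow> real" and g :: "'x \<Rightarrow> ereal" and h :: "'u \<Rightarrow> ereal"
  assumes lin: "linear K"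
    and scf: "convex_on UNIV (\<lambda>y. f y - \<mu>\<^sub>f / 2 * (norm y)\<^sup>2)" and scg: "strongly_convex_fun \<mu>\<^sub>g g"
    and cvh: "convex_fun h" and gnm: "\<And>y. g y \<noteq> -\<infinity>" and hnm: "\<And>y. h y \<noteq> -\<infinity>"
    and \<mu>: "0 \<le> \<mu>\<^sub>f" "0 \<le> \<mu>\<^sub>g" "0 < \<mu>\<^sub>f + \<mu>\<^sub>g"
    and "y \<noteq> z" and y: "ereal (f y) + g y + h (K y) = ereal r" and z: "ereal (f z) + g z + h (K z) = ereal r"
  shows "ereal (f (midpoint y z)) + g (midpoint y z) + h (K (midpoint y z)) < ereal r"
proof -
  define N where "N = (norm (y - z))\<^sup>2"
  obtain gy hy where gy: "g y = ereal gy" and hy: "h (K y) = ereal hy" and ry: "r = f y + gy + hy"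
    using y gnm[of y] hnm[of "K y"] by (cases "g y"; cases "h (K y)") auto
  obtain gz hz where gz: "g z = ereal gz" and hz: "h (K z) = ereal hz" and rz: "r = f z + gz + hz"
    using z gnm[of z] hnm[of "K z"] by (cases "g z"; cases "h (K z)") auto
  obtain vf where vf: "ereal (f (midpoint y z)) = ereal vf"
    and vfle: "vf \<le> f y / 2 + f z / 2 - \<mu>\<^sub>f / 8 * N"
    unfolding N_def by (rule strongly_convex_fun_midpoint[OF strongly_convex_fun_ereal[OF scf]]) auto
  obtain vg where vg: "g (midpoint y z) = ereal vg" and vgle: "vg \<le> gy / 2 + gz / 2 - \<mu>\<^sub>g / 8 * N"
    unfolding N_def by (rule strongly_convex_fun_midpoint[OF scg gnm gy gz])
  have "K (midpoint y z) = midpoint (K y) (K z)"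
    by (simp add: midpoint_def linear_add[OF lin] linear_scale[OF lin])
  then obtain vh where vh: "h (K (midpoint y z)) = ereal vh" and vhle: "vh \<le> hy / 2 + hz / 2"
    using strongly_convex_fun_midpoint[OF convex_fun_imp_strongly_convex_0[OF cvh] hnm hy hz] by auto
  have "0 < N" using \<open>y \<noteq> z\<close> by (simp add: N_def)
  with \<mu> have "0 < (\<mu>\<^sub>f / 8 + \<mu>\<^sub>g / 8) * N" by (intro mult_pos_pos) auto
  then have "0 < \<mu>\<^sub>f / 8 * N + \<mu>\<^sub>g / 8 * N" by (simp only: distrib_right)
  with vf vfle vgle vhle ry rz have "vf + vg + vh < r" by simp
  then show ?thesis using vf by (simp add: vg vh)
qed

lemma dual_midpoint_lt:
  fixes K :: "'x::euclidean_space \<Rightarrow> 'u::euclidean_space"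
    and F :: "'x \<Rightarrow> ereal" and h :: "'u \<Rightarrow> ereal"
  assumes lin: "linear K" and F: "proper_fun F" and h: "proper_fun h"
    and sch: "strongly_convex_fun \<mu> (conjugate h)" and \<mu>: "0 < \<mu>"
    and "y \<noteq> z" and y: "conjugate F (- adjoint K y) + conjugate h y = ereal r"
    and z: "conjugate F (- adjoint K z) + conjugate h z = ereal r"
  shows "conjugate F (- adjoint K (midpoint y z)) + conjugate h (midpoint y z) < ereal r"
proof -
  have Fnm: "\<And>v. conjugate F v \<noteq> -\<infinity>" using conjugate_not_MInfty[OF F] .
  have hnm: "\<And>v. conjugate h v \<noteq> -\<infinity>" using conjugate_not_MInfty[OF h] .
  obtain cy hy where cy: "conjugate F (- adjoint K y) = ereal cy" and hy: "conjugate h y = ereal hy"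
    and ry: "r = cy + hy"
    using y Fnm hnm by (cases "conjugate F (- adjoint K y)"; cases "conjugate h y") auto
  obtain cz hz where cz: "conjugate F (- adjoint K z) = ereal cz" and hz: "conjugate h z = ereal hz"
    and rz: "r = cz + hz"
    using z Fnm hnm by (cases "conjugate F (- adjoint K z)"; cases "conjugate h z") auto
  have cvF: "strongly_convex_fun 0 (conjugate F)"
    using F unfolding proper_fun_def by (simp add: convex_fun_imp_strongly_convex_0 convex_fun_conjugate)
  have Km: "- adjoint K (midpoint y z) = midpoint (- adjoint K y) (- adjoint K z)"
    using linear_add[OF adjoint_linear[OF lin]] linear_scale[OF adjoint_linear[OF lin]]
    by (simp add: midpoint_def algebra_simps)
  obtain v1 where v1: "conjugate F (- adjoint K (midpoint y z)) = ereal v1"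
    and v1le: "v1 \<le> cy / 2 + cz / 2"
    by (rule strongly_convex_fun_midpoint[OF cvF Fnm cy cz]) (auto simp: Km)
  obtain v2 where v2: "conjugate h (midpoint y z) = ereal v2"
    and v2le: "v2 \<le> hy / 2 + hz / 2 - \<mu> / 8 * (norm (y - z))\<^sup>2"
    by (rule strongly_convex_fun_midpoint[OF sch hnm hy hz])
  have "0 < \<mu> / 8 * (norm (y - z))\<^sup>2" using \<mu> \<open>y \<noteq> z\<close> by simp
  with v1le v2le ry rz have "v1 + v2 < r" by linarith
  then show ?thesis by (simp add: v1 v2)
qed

lemma min_unique_of_midpoint_lt:
  fixes F :: "'a::real_vector \<Rightarrow> ereal"
  assumes a: "\<And>y. F a \<le> F y" and b: "\<And>y. F b \<le> F y" and r: "F a = ereal r"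
    and mid: "\<And>y z. y \<noteq> z \<Longrightarrow> F y = ereal r \<Longrightarrow> F z = ereal r \<Longrightarrow> F (midpoint y z) < ereal r"
  shows "a = b"
proof (rule ccontr)
  assume "a \<noteq> b"
  moreover have "F b = ereal r" using a[of b] b[of a] r by simp
  ultimately have "F (midpoint a b) < F a" using mid r by simp
  with a show False by (simp add: not_less[symmetric])
qed

lemma space_gen_filtration [simp]: "space (gen_filtration M Z t) = space M"
  unfolding gen_filtration_def by (simp add: space_measure_of_conv)

lemma sets_gen_filtration:
  "sets (gen_filtration M Z t) = sigma_sets (space M) (\<Union>i\<in>{..t}. {Z i -` B \<inter> space M | B. B \<in> sets borel})"
  unfolding gen_filtration_def by (rule sets_measure_of) blast

lemma measurable_gen_filtration: "Z t \<in> borel_measurable (gen_filtration M Z t)"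
proof (rule measurableI)
  fix B :: "'b set" assume "B \<in> sets borel"
  then show "Z t -` B \<inter> space (gen_filtration M Z t) \<in> sets (gen_filtration M Z t)"
    unfolding sets_gen_filtration space_gen_filtration by (intro sigma_sets.Basic) blast
qed simp

lemma sigma_finite_subalgebra_gen_filtration:
  assumes "prob_space M" and Z: "\<And>i. Z i \<in> borel_measurable M"
  shows "sigma_finite_subalgebra M (gen_filtration M Z t)"
proof -
  interpret prob_space M by fact
  have "(\<Union>i\<in>{..t}. {Z i -` B \<inter> space M | B. B \<in> sets borel}) \<subseteq> sets M"
    using Z measurable_sets by blast
  then have "subalgebra M (gen_filtration M Z t)"
    unfolding subalgebra_def sets_gen_filtration using sets.sigma_sets_subset by simp
  then have "finite_measure_subalgebra M (gen_filtration M Z t)"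
    by (intro finite_measure_subalgebra.intro finite_measure_subalgebra_axioms.intro)
       (simp add: finite_measure_axioms)
  then show ?thesis by (rule finite_measure_subalgebra_is_sigma_finite)
qed

text \<open>Integrating a conditional bound: only nonnegative integrals of the hypotheses are needed,
  and integrability of \<open>f\<close> and \<open>e\<close> comes out of the bound.\<close>

lemma integral_le_of_nn_cond_exp_le:
  assumes F: "sigma_finite_subalgebra M F"
    and [measurable]: "f \<in> borel_measurable M" "e \<in> borel_measurable M"
    and nonneg: "\<And>s. 0 \<le> f s" "\<And>s. 0 \<le> e s" "\<And>s. 0 \<le> g s" and g: "integrable M g"
    and le: "AE s in M. nn_cond_exp M F (\<lambda>s. ennreal (f s)) s + ennreal (e s) \<le> ennreal (g s)"
  shows "integrable M f" and "integrable M e" and "(\<integral>s. f s \<partial>M) + (\<integral>s. e s \<partial>M) \<le> (\<integral>s. g s \<partial>M)"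
proof -
  interpret sigma_finite_subalgebra M F by fact
  have "(\<integral>\<^sup>+ s. ennreal (f s) \<partial>M) + (\<integral>\<^sup>+ s. ennreal (e s) \<partial>M)
      = (\<integral>\<^sup>+ s. nn_cond_exp M F (\<lambda>s. ennreal (f s)) s \<partial>M) + (\<integral>\<^sup>+ s. ennreal (e s) \<partial>M)"
    using nn_cond_exp_intg[of "\<lambda>_. 1" "\<lambda>s. ennreal (f s)"] by simp
  also have "\<dots> = (\<integral>\<^sup>+ s. nn_cond_exp M F (\<lambda>s. ennreal (f s)) s + ennreal (e s) \<partial>M)"
    by (rule nn_integral_add[symmetric]) (simp_all add: borel_measurable_nn_cond_exp2)
  also have "\<dots> \<le> (\<integral>\<^sup>+ s. ennreal (g s) \<partial>M)" by (rule nn_integral_mono_AE[OF le])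
  also have "\<dots> = ennreal (\<integral>s. g s \<partial>M)" using g nonneg by (simp add: nn_integral_eq_integral)
  finally have sum: "(\<integral>\<^sup>+ s. ennreal (f s) \<partial>M) + (\<integral>\<^sup>+ s. ennreal (e s) \<partial>M) \<le> ennreal (\<integral>s. g s \<partial>M)" .
  have "(\<integral>\<^sup>+ s. ennreal (f s) \<partial>M) \<le> (\<integral>\<^sup>+ s. ennreal (f s) \<partial>M) + (\<integral>\<^sup>+ s. ennreal (e s) \<partial>M)"
    by (rule add_increasing2) simp_all
  then have "(\<integral>\<^sup>+ s. ennreal (f s) \<partial>M) < \<infinity>"
    using order_trans[OF _ sum] ennreal_less_top le_less_trans by (metis infinity_ennreal_def)
  then show fi: "integrable M f" using nonneg by (intro integrableI_nonneg) auto
  have "(\<integral>\<^sup>+ s. ennreal (e s) \<partial>M) \<le> (\<integral>\<^sup>+ s. ennreal (f s) \<partial>M) + (\<integral>\<^sup>+ s. ennreal (e s) \<partial>M)"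
    by (rule add_increasing) simp_all
  then have "(\<integral>\<^sup>+ s. ennreal (e s) \<partial>M) < \<infinity>"
    using order_trans[OF _ sum] ennreal_less_top le_less_trans by (metis infinity_ennreal_def)
  then show ei: "integrable M e" using nonneg by (intro integrableI_nonneg) auto
  have "ennreal ((\<integral>s. f s \<partial>M) + (\<integral>s. e s \<partial>M)) \<le> ennreal (\<integral>s. g s \<partial>M)"
    using sum fi ei nonneg by (simp add: nn_integral_eq_integral ennreal_plus)
  moreover have "0 \<le> (\<integral>s. g s \<partial>M)" using nonneg by (simp add: integral_nonneg)
  ultimately show "(\<integral>s. f s \<partial>M) + (\<integral>s. e s \<partial>M) \<le> (\<integral>s. g s \<partial>M)"
    using ennreal_le_iff by blast
qed

lemma abs_inner_Basis_mult_le: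
  fixes v w :: "'a::euclidean_space"
  assumes "b \<in> Basis"
  shows "\<bar>(v \<bullet> b) * (w \<bullet> b)\<bar> \<le> (norm v)\<^sup>2 + (norm w)\<^sup>2"
proof -
  have "\<bar>(v \<bullet> b) * (w \<bullet> b)\<bar> \<le> norm v * norm w"
    unfolding abs_mult by (intro mult_mono Basis_le_norm[OF assms]) simp_all
  moreover have "2 * (norm v * norm w) \<le> (norm v)\<^sup>2 + (norm w)\<^sup>2"
    using sum_squares_bound[of "norm v" "norm w"] by (simp add: mult.assoc)
  moreover have "0 \<le> norm v * norm w" by simp
  ultimately show ?thesis by linarith
qed

text \<open>The residual \<open>X - Y\<close> of a conditional expectation \<open>Y = E[X | F]\<close> is orthogonal in \<open>L\<^sup>2\<close>
  to every \<open>F\<close>-measurable \<open>V\<close>; coordinatewise this is the defining property of \<open>real_cond_exp\<close>.\<close>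

lemma integral_inner_cond_exp_residual:
  fixes V X Y :: "'s \<Rightarrow> 'a::euclidean_space"
  assumes F: "sigma_finite_subalgebra M F" and VF: "V \<in> borel_measurable F"
    and [measurable]: "X \<in> borel_measurable M" "Y \<in> borel_measurable M"
    and XY: "cond_exp_vec_eq M F X Y"
    and iV: "integrable M (\<lambda>s. (norm (V s))\<^sup>2)" and iX: "integrable M (\<lambda>s. (norm (X s))\<^sup>2)"
    and iY: "integrable M (\<lambda>s. (norm (Y s))\<^sup>2)"
  shows "integrable M (\<lambda>s. V s \<bullet> (X s - Y s))" and "(\<integral>s. V s \<bullet> (X s - Y s) \<partial>M) = 0"
proof -
  interpret sigma_finite_subalgebra M F by fact
  have [measurable]: "V \<in> borel_measurable M" by (rule measurable_from_subalg[OF subalg VF])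
  have coord: "integrable M (\<lambda>s. (V s \<bullet> b) * ((X s - Y s) \<bullet> b))
      \<and> (\<integral>s. (V s \<bullet> b) * ((X s - Y s) \<bullet> b) \<partial>M) = 0" if b: "b \<in> Basis" for b
  proof -
    have iVX: "integrable M (\<lambda>s. (V s \<bullet> b) * (X s \<bullet> b))"
      by (rule Bochner_Integration.integrable_bound[OF Bochner_Integration.integrable_add[OF iV iX]])
         (measurable, simp add: abs_inner_Basis_mult_le[OF b])
    have iVY: "integrable M (\<lambda>s. (V s \<bullet> b) * (Y s \<bullet> b))"
      by (rule Bochner_Integration.integrable_bound[OF Bochner_Integration.integrable_add[OF iV iY]])
         (measurable, simp add: abs_inner_Basis_mult_le[OF b])
    have VbF: "(\<lambda>s. V s \<bullet> b) \<in> borel_measurable F" using VF by measurable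
    have "(\<integral>s. (V s \<bullet> b) * (X s \<bullet> b) \<partial>M) = (\<integral>s. (V s \<bullet> b) * real_cond_exp M F (\<lambda>s. X s \<bullet> b) s \<partial>M)"
      by (rule real_cond_exp_intg(2)[OF iVX VbF, symmetric]) measurable
    also have "\<dots> = (\<integral>s. (V s \<bullet> b) * (Y s \<bullet> b) \<partial>M)"
      using XY b unfolding cond_exp_vec_eq_def by (intro integral_cong_AE) (measurable, fastforce)
    finally have "(\<integral>s. (V s \<bullet> b) * (X s \<bullet> b) \<partial>M) = (\<integral>s. (V s \<bullet> b) * (Y s \<bullet> b) \<partial>M)" .
    with iVX iVY show ?thesis by (simp add: inner_diff_left right_diff_distrib)
  qed
  have eq: "(\<lambda>s. V s \<bullet> (X s - Y s)) = (\<lambda>s. \<Sum>b\<in>Basis. (V s \<bullet> b) * ((X s - Y s) \<bullet> b))"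
    by (rule ext) (rule euclidean_inner)
  show "integrable M (\<lambda>s. V s \<bullet> (X s - Y s))" unfolding eq using coord by auto
  show "(\<integral>s. V s \<bullet> (X s - Y s) \<partial>M) = 0" unfolding eq using coord by (simp add: integral_sum)
qed

lemma AE_LIMSEQ_0_of_nn_integral_summable:
  fixes f :: "nat \<Rightarrow> 's \<Rightarrow> real"
  assumes [measurable]: "\<And>t. f t \<in> borel_measurable M" and f: "\<And>t s. 0 \<le> f t s"
    and le: "\<And>t. (\<integral>\<^sup>+ s. ennreal (f t s) \<partial>M) \<le> ennreal (b t)"
    and b: "summable b" "\<And>t. 0 \<le> b t"
  shows "AE s in M. (\<lambda>t. f t s) \<longlonglongrightarrow> 0"
proof -
  have "(\<integral>\<^sup>+ s. (\<Sum>t. ennreal (f t s)) \<partial>M) = (\<Sum>t. \<integral>\<^sup>+ s. ennreal (f t s) \<partial>M)"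
    by (rule nn_integral_suminf) measurable
  also have "\<dots> \<le> (\<Sum>t. ennreal (b t))" by (intro suminf_le le) auto
  also have "\<dots> = ennreal (\<Sum>t. b t)" using b by (intro suminf_ennreal2)
  finally have "(\<integral>\<^sup>+ s. (\<Sum>t. ennreal (f t s)) \<partial>M) \<noteq> \<infinity>"
    by (metis ennreal_less_top infinity_ennreal_def le_less_trans less_irrefl)
  then have "AE s in M. (\<Sum>t. ennreal (f t s)) \<noteq> \<infinity>"
    by (intro nn_integral_PInf_AE) measurable
  then show ?thesis
  proof (rule AE_mp, intro AE_I2 impI)
    fix s assume "(\<Sum>t. ennreal (f t s)) \<noteq> \<infinity>"
    then have "summable (\<lambda>t. f t s)" using summable_suminf_not_top f by auto
    then show "(\<lambda>t. f t s) \<longlonglongrightarrow> 0" by (rule summable_LIMSEQ_zero)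
  qed
qed

lemma LIMSEQ_of_norm_sq_le:
  fixes v :: "nat \<Rightarrow> 'a::real_normed_vector"
  assumes le: "\<And>t. (norm (v t - l))\<^sup>2 \<le> k * p t" and p: "p \<longlonglongrightarrow> 0" and k: "0 \<le> k"
  shows "v \<longlonglongrightarrow> l"
proof -
  have "(\<lambda>t. sqrt (k * p t)) \<longlonglongrightarrow> sqrt (k * 0)" by (intro tendsto_intros p)
  then have lim: "(\<lambda>t. sqrt (k * p t)) \<longlonglongrightarrow> 0" by simp
  have "norm (v t - l) \<le> sqrt (k * p t)" for t
    using real_sqrt_le_mono[OF le[of t]] by simp
  then have "(\<lambda>t. norm (v t - l)) \<longlonglongrightarrow> 0"
    by (intro tendsto_sandwich[OF _ _ tendsto_const lim]) auto
  then show ?thesis by (simp add: LIM_zero_iff tendsto_norm_zero_iff)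
qed

locale randprox =
  fixes M :: "'s measure"
    and K :: "'x::euclidean_space \<Rightarrow> 'u::euclidean_space"
    and f :: "'x \<Rightarrow> real" and gradf :: "'x \<Rightarrow> 'x"
    and g :: "'x \<Rightarrow> ereal" and h :: "'u \<Rightarrow> ereal"
    and L \<mu>\<^sub>f \<mu>\<^sub>g \<mu>\<^sub>h \<gamma> \<tau> \<omega> \<omega>\<^sub>r\<^sub>a\<^sub>n \<zeta> :: real
    and x0 :: 'x and u0 :: 'u
    and x xhat :: "nat \<Rightarrow> 's \<Rightarrow> 'x" and u R :: "nat \<Rightarrow> 's \<Rightarrow> 'u"
    and xs :: 'x and us :: 'u
  assumes prob: "prob_space M"
    and lin: "linear K"
    and f_convex: "convex_on UNIV f"
    and f_deriv: "\<And>y. (f has_derivative (\<lambda>d. gradf y \<bullet> d)) (at y)"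
    and L_pos: "L > 0" and gradf_lipschitz: "\<And>y z. norm (gradf y - gradf z) \<le> L * norm (y - z)"
    and g_proper: "proper_fun g" and g_closed: "closed_fun g"
    and h_proper: "proper_fun h" and h_closed: "closed_fun h" and h_convex: "convex_fun h"
    and \<mu>\<^sub>f_nonneg: "\<mu>\<^sub>f \<ge> 0" and \<mu>\<^sub>g_nonneg: "\<mu>\<^sub>g \<ge> 0"
    and f_strongly_convex: "convex_on UNIV (\<lambda>y. f y - \<mu>\<^sub>f / 2 * (norm y)\<^sup>2)"
    and g_strongly_convex: "strongly_convex_fun \<mu>\<^sub>g g"
    and h_conj_strongly_convex: "strongly_convex_fun \<mu>\<^sub>h (conjugate h)"
    and kkt: "\<exists>xa ua. - gradf xa - adjoint K ua \<in> subdiff g xa \<and> K xa \<in> subdiff (conjugate h) ua"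
    and xs_min: "\<And>y. ereal (f xs) + g xs + h (K xs) \<le> ereal (f y) + g y + h (K y)"
    and us_min: "\<And>v. conjugate (\<lambda>y. ereal (f y) + g y) (- adjoint K us) + conjugate h us
             \<le> conjugate (\<lambda>y. ereal (f y) + g y) (- adjoint K v) + conjugate h v"
    and \<omega>_nonneg: "\<omega> \<ge> 0" and \<omega>\<^sub>r\<^sub>a\<^sub>n_nonneg: "\<omega>\<^sub>r\<^sub>a\<^sub>n \<ge> 0" and \<zeta>_nonneg: "0 \<le> \<zeta>" and \<zeta>_le_1: "\<zeta> \<le> 1"
    and \<mu>\<^sub>f\<^sub>g_pos: "\<mu>\<^sub>f > 0 \<or> \<mu>\<^sub>g > 0" and \<mu>\<^sub>h_pos: "\<mu>\<^sub>h > 0"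
    and \<gamma>_pos: "0 < \<gamma>" and \<gamma>_less: "\<gamma> < 2 / L" and \<tau>_pos: "\<tau> > 0"
    and step_size: "\<gamma> * \<tau> * ((1 - \<zeta>) * (onorm K)\<^sup>2 + \<omega>\<^sub>r\<^sub>a\<^sub>n) \<le> 1"
    and x_0: "x 0 = (\<lambda>s. x0)" and u_0: "u 0 = (\<lambda>s. u0)"
    and xhat_eq: "\<And>t s. xhat t s = prox \<gamma> g (x t s - \<gamma> *\<^sub>R gradf (x t s) - \<gamma> *\<^sub>R adjoint K (u t s))"
    and u_Suc: "\<And>t s. u (Suc t) s = u t s + (1 / (1 + \<omega>)) *\<^sub>R R t s"
    and x_Suc: "\<And>t s. x (Suc t) s = xhat t s - (\<gamma> * (1 + \<omega>)) *\<^sub>R (adjoint K (u (Suc t) s) - adjoint K (u t s))"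
    and R_measurable: "\<And>t. R t \<in> borel_measurable M"
    and R_cond_mean: "\<And>t. cond_exp_vec_eq M (gen_filtration M (\<lambda>i s. (x i s, u i s)) t) (R t)
               (\<lambda>s. prox \<tau> (conjugate h) (u t s + \<tau> *\<^sub>R K (xhat t s)) - u t s)"
    and R_cond_var: "\<And>t. AE s in M.
           nn_cond_exp M (gen_filtration M (\<lambda>i s. (x i s, u i s)) t)
             (\<lambda>s. ennreal ((norm (R t s - (prox \<tau> (conjugate h) (u t s + \<tau> *\<^sub>R K (xhat t s)) - u t s)))\<^sup>2)) s
           \<le> ennreal (\<omega> * (norm (prox \<tau> (conjugate h) (u t s + \<tau> *\<^sub>R K (xhat t s)) - u t s))\<^sup>2)"
    and R_cond_var_adjoint: "\<And>t. AE s in M.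
           nn_cond_exp M (gen_filtration M (\<lambda>i s. (x i s, u i s)) t)
             (\<lambda>s. ennreal ((norm (adjoint K (R t s - (prox \<tau> (conjugate h) (u t s + \<tau> *\<^sub>R K (xhat t s)) - u t s))))\<^sup>2)) s
           + ennreal (\<zeta> * (norm (adjoint K (prox \<tau> (conjugate h) (u t s + \<tau> *\<^sub>R K (xhat t s)) - u t s)))\<^sup>2)
           \<le> ennreal (\<omega>\<^sub>r\<^sub>a\<^sub>n * (norm (prox \<tau> (conjugate h) (u t s + \<tau> *\<^sub>R K (xhat t s)) - u t s))\<^sup>2)"
begin

definition dual_weight :: real where
  "dual_weight = 1 / \<tau> + 2 * \<mu>\<^sub>h"

definition lyapunov :: "'x \<Rightarrow> 'u \<Rightarrow> real" where
  "lyapunov x' u' = (1 / \<gamma>) * (norm (x' - xs))\<^sup>2 + (1 + \<omega>) * dual_weight * (norm (u' - us))\<^sup>2"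

definition rate :: real where
  "rate = max (max ((1 - \<gamma> * \<mu>\<^sub>f)\<^sup>2 / (1 + \<gamma> * \<mu>\<^sub>g)) ((\<gamma> * L - 1)\<^sup>2 / (1 + \<gamma> * \<mu>\<^sub>g)))
              (1 - 2 * \<tau> * \<mu>\<^sub>h / ((1 + \<omega>) * (1 + 2 * \<tau> * \<mu>\<^sub>h)))"

definition primal_step :: "'x \<Rightarrow> 'u \<Rightarrow> 'x" where
  "primal_step x' u' = prox \<gamma> g (x' - \<gamma> *\<^sub>R gradf x' - \<gamma> *\<^sub>R adjoint K u')"

definition dual_residual :: "'x \<Rightarrow> 'u \<Rightarrow> 'u" where
  "dual_residual x' u' = prox \<tau> (conjugate h) (u' + \<tau> *\<^sub>R K (primal_step x' u')) - u'"

text \<open>The iterates that RandProx would produce if the estimate \<open>R t\<close> returned the residual exactly.\<close>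

definition primal_update :: "'x \<Rightarrow> 'u \<Rightarrow> 'x" where
  "primal_update x' u' = primal_step x' u' - \<gamma> *\<^sub>R adjoint K (dual_residual x' u')"

definition dual_update :: "'x \<Rightarrow> 'u \<Rightarrow> 'u" where
  "dual_update x' u' = u' + (1 / (1 + \<omega>)) *\<^sub>R dual_residual x' u'"

definition noise_weight :: "'x \<Rightarrow> 'u \<Rightarrow> 'u" where
  "noise_weight x' u' = (2 * dual_weight) *\<^sub>R (dual_update x' u' - us) - 2 *\<^sub>R K (primal_update x' u' - xs)"

definition filt :: "nat \<Rightarrow> 's measure" where
  "filt t = gen_filtration M (\<lambda>i s. (x i s, u i s)) t"

lemma g_not_MInfty: "g y \<noteq> -\<infinity>"
  using g_proper unfolding proper_fun_def by blast

lemma h_not_MInfty: "h y \<noteq> -\<infinity>"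
  using h_proper unfolding proper_fun_def by blast

lemma dual_weight_pos: "0 < dual_weight"
  unfolding dual_weight_def using \<tau>_pos \<mu>\<^sub>h_pos by (simp add: add_pos_pos)

lemma proper_conjugate_h: "proper_fun (conjugate h)"
proof -
  obtain xa ua where "K xa \<in> subdiff (conjugate h) ua" using kkt by blast
  then have "conjugate h ua \<noteq> \<infinity>" unfolding subdiff_def by auto
  then show ?thesis unfolding proper_fun_def using conjugate_not_MInfty[OF h_proper] by blast
qed

sublocale prox_g: strongly_convex_prox g \<gamma> \<mu>\<^sub>g
  using g_proper g_closed g_strongly_convex \<mu>\<^sub>g_nonneg \<gamma>_pos by unfold_locales

sublocale prox_h: strongly_convex_prox "conjugate h" \<tau> \<mu>\<^sub>h
  using proper_conjugate_h closed_fun_conjugate[OF h_proper] h_conj_strongly_convex \<mu>\<^sub>h_pos \<tau>_pos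
  by unfold_locales auto

text \<open>The primal and dual problems have unique solutions, so \<open>xs\<close> and \<open>us\<close> form the KKT pair.\<close>

lemma kkt_solution:
  shows "- gradf xs - adjoint K us \<in> subdiff g xs" and "K xs \<in> subdiff (conjugate h) us"
proof -
  obtain xa ua where xa: "- gradf xa - adjoint K ua \<in> subdiff g xa"
    and ua': "K xa \<in> subdiff (conjugate h) ua"
    using kkt by blast
  have ua: "ua \<in> subdiff h (K xa)" by (rule subdiff_conjugate_imp_subdiff[OF h_proper h_closed h_convex ua'])
  have "g xa \<noteq> \<infinity>" "h (K xa) \<noteq> \<infinity>" using xa ua unfolding subdiff_def by auto
  then obtain r where r: "ereal (f xa) + g xa + h (K xa) = ereal r"
    using g_not_MInfty[of xa] h_not_MInfty[of "K xa"] by (cases "g xa"; cases "h (K xa)") auto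
  have "xa = xs"
  proof (rule min_unique_of_midpoint_lt[where F = "\<lambda>y. ereal (f y) + g y + h (K y)", OF _ xs_min r])
    show "ereal (f xa) + g xa + h (K xa) \<le> ereal (f y) + g y + h (K y)" for y
      by (rule kkt_imp_primal_min[OF lin f_convex f_deriv g_not_MInfty xa ua])
    show "ereal (f (midpoint y z)) + g (midpoint y z) + h (K (midpoint y z)) < ereal r"
      if "y \<noteq> z" "ereal (f y) + g y + h (K y) = ereal r" "ereal (f z) + g z + h (K z) = ereal r" for y z
      using primal_midpoint_lt[OF lin f_strongly_convex g_strongly_convex h_convex g_not_MInfty
          h_not_MInfty \<mu>\<^sub>f_nonneg \<mu>\<^sub>g_nonneg _ that] \<mu>\<^sub>f\<^sub>g_pos \<mu>\<^sub>f_nonneg \<mu>\<^sub>g_nonneg by linarith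
  qed
  define D where "D = (\<lambda>v. conjugate (\<lambda>y. ereal (f y) + g y) (- adjoint K v) + conjugate h v)"
  have Dua: "D ua = ereal (- r)" and Dmin: "\<And>v. D ua \<le> D v"
    using kkt_imp_dual_min[OF lin f_convex f_deriv g_not_MInfty h_not_MInfty xa ua] r unfolding D_def by auto
  have Dus: "\<And>v. D us \<le> D v" unfolding D_def by (rule us_min)
  have "proper_fun (\<lambda>y. ereal (f y) + g y)"
    unfolding proper_fun_def
  proof
    show "\<forall>y. ereal (f y) + g y \<noteq> -\<infinity>" using g_not_MInfty by simp
    show "\<exists>y. ereal (f y) + g y \<noteq> \<infinity>" using \<open>g xa \<noteq> \<infinity>\<close> by (intro exI[of _ xa]) simp
  qed
  then have "ua = us"
    using min_unique_of_midpoint_lt[where F = D, OF Dmin Dus Dua]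
      dual_midpoint_lt[OF lin _ h_proper h_conj_strongly_convex \<mu>\<^sub>h_pos] unfolding D_def by blast
  with \<open>xa = xs\<close> xa ua' show "- gradf xs - adjoint K us \<in> subdiff g xs" and "K xs \<in> subdiff (conjugate h) us"
    by auto
qed

lemma primal_step_solution: "primal_step xs us = xs"
  using prox_g.prox_subdiff_fixpoint[OF kkt_solution(1)]
  unfolding primal_step_def by (simp add: algebra_simps)

lemma dual_residual_solution: "dual_residual xs us = 0"
  using prox_h.prox_subdiff_fixpoint[OF kkt_solution(2)]
  unfolding dual_residual_def primal_step_solution by simp

lemma bounded_linear_K: "bounded_linear K"
  using lin by (simp add: linear_conv_bounded_linear)

lemma bounded_linear_adjoint: "bounded_linear (adjoint K)"
  using adjoint_linear[OF lin] by (simp add: linear_conv_bounded_linear)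

lemma onorm_K_nonneg: "0 \<le> onorm K"
  using onorm_pos_le[of K] lin by (simp add: linear_conv_bounded_linear)

lemma norm_K_le: "norm (K v) \<le> onorm K * norm v"
  using onorm[of K] lin by (simp add: linear_conv_bounded_linear)

lemma norm_adjoint_le: "norm (adjoint K v) \<le> onorm K * norm v"
proof -
  have "(norm (adjoint K v))\<^sup>2 = K (adjoint K v) \<bullet> v"
    by (simp add: power2_norm_eq_inner adjoint_works[OF lin])
  also have "\<dots> \<le> onorm K * norm (adjoint K v) * norm v"
    using norm_cauchy_schwarz[of "K (adjoint K v)" v] norm_K_le[of "adjoint K v"]
    by (meson mult_right_mono norm_ge_zero order_trans)
  finally show ?thesis
    by (cases "adjoint K v = 0") (simp_all add: power2_eq_square mult.assoc onorm_K_nonneg)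
qed

lemma \<mu>\<^sub>f_le_L: "\<mu>\<^sub>f \<le> L"
  by (rule strong_convexity_le_lipschitz[OF f_deriv gradf_lipschitz f_strongly_convex])

lemma rate_less_1: "rate < 1"
proof -
  have \<gamma>L: "0 < \<gamma> * L" "\<gamma> * L < 2" using \<gamma>_pos L_pos \<gamma>_less by (simp_all add: field_simps)
  have \<gamma>\<mu>\<^sub>f: "0 \<le> \<gamma> * \<mu>\<^sub>f" "\<gamma> * \<mu>\<^sub>f \<le> \<gamma> * L"
    using \<gamma>_pos \<mu>\<^sub>f_nonneg \<mu>\<^sub>f_le_L by simp_all
  have "(1 - \<gamma> * \<mu>\<^sub>f)\<^sup>2 / (1 + \<gamma> * \<mu>\<^sub>g) < 1"
  proof (cases "\<mu>\<^sub>g > 0")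
    case True
    have "(1 - \<gamma> * \<mu>\<^sub>f)\<^sup>2 \<le> 1" using \<gamma>L \<gamma>\<mu>\<^sub>f by (simp add: abs_square_le_1)
    also have "1 < 1 + \<gamma> * \<mu>\<^sub>g" using True \<gamma>_pos by simp
    finally show ?thesis using \<gamma>_pos \<mu>\<^sub>g_nonneg by (simp add: divide_less_eq add_pos_nonneg)
  next
    case False
    with \<mu>\<^sub>g_nonneg \<mu>\<^sub>f\<^sub>g_pos \<gamma>_pos have "\<mu>\<^sub>g = 0" "0 < \<gamma> * \<mu>\<^sub>f" by auto
    with \<gamma>L \<gamma>\<mu>\<^sub>f show ?thesis by (simp add: abs_square_less_1)
  qed
  moreover have "(\<gamma> * L - 1)\<^sup>2 / (1 + \<gamma> * \<mu>\<^sub>g) < 1"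
  proof -
    have "(\<gamma> * L - 1)\<^sup>2 < 1" using \<gamma>L by (simp add: abs_square_less_1)
    moreover have "1 \<le> 1 + \<gamma> * \<mu>\<^sub>g" using \<gamma>_pos \<mu>\<^sub>g_nonneg by simp
    ultimately show ?thesis by (simp add: divide_less_eq)
  qed
  moreover have "0 < 2 * \<tau> * \<mu>\<^sub>h / ((1 + \<omega>) * (1 + 2 * \<tau> * \<mu>\<^sub>h))"
    using \<tau>_pos \<mu>\<^sub>h_pos \<omega>_nonneg by (simp add: add_pos_pos)
  ultimately show ?thesis unfolding rate_def by simp
qed

lemma rate_pos: "0 < rate"
proof -
  have "2 * \<tau> * \<mu>\<^sub>h < (1 + \<omega>) * (1 + 2 * \<tau> * \<mu>\<^sub>h)"
    using \<tau>_pos \<mu>\<^sub>h_pos \<omega>_nonneg by (simp add: algebra_simps add_pos_nonneg)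
  then have "0 < 1 - 2 * \<tau> * \<mu>\<^sub>h / ((1 + \<omega>) * (1 + 2 * \<tau> * \<mu>\<^sub>h))"
    using \<tau>_pos \<mu>\<^sub>h_pos \<omega>_nonneg by (simp add: divide_less_eq add_pos_nonneg)
  then show ?thesis unfolding rate_def by simp
qed

text \<open>Strong monotonicity of \<open>prox \<gamma> g\<close> against the gradient-step contraction; the cross term
  \<open>K a \<bullet> d\<close> is the one cancelled by the dual step.\<close>

lemma primal_step_bound:
  fixes x' :: 'x and u' :: 'u
  defines "a \<equiv> primal_step x' u' - xs"
  shows "(1 / \<gamma>) * (norm a)\<^sup>2 + 2 * (K a \<bullet> (u' - us)) \<le> rate * ((1 / \<gamma>) * (norm (x' - xs))\<^sup>2)"
proof -
  define w where "w = (x' - \<gamma> *\<^sub>R gradf x') - (xs - \<gamma> *\<^sub>R gradf xs)"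
  define \<kappa> where "\<kappa> = 1 + \<gamma> * \<mu>\<^sub>g"
  have \<kappa>: "1 \<le> \<kappa>" unfolding \<kappa>_def using \<gamma>_pos \<mu>\<^sub>g_nonneg by simp
  have "\<kappa> * (norm a)\<^sup>2
      \<le> a \<bullet> ((x' - \<gamma> *\<^sub>R gradf x' - \<gamma> *\<^sub>R adjoint K u') - (xs - \<gamma> *\<^sub>R gradf xs - \<gamma> *\<^sub>R adjoint K us))"
    using prox_g.prox_strongly_monotone unfolding a_def \<kappa>_def primal_step_def
    by (metis primal_step_def primal_step_solution)
  also have "\<dots> = a \<bullet> w - \<gamma> * (K a \<bullet> (u' - us))"
    by (simp add: w_def inner_diff_right adjoint_works[OF lin] algebra_simps)
  finally have G: "\<kappa> * (norm a)\<^sup>2 \<le> a \<bullet> w - \<gamma> * (K a \<bullet> (u' - us))" .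
  have "0 \<le> (norm (1 *\<^sub>R w - \<kappa> *\<^sub>R a))\<^sup>2" by simp
  then have AM_GM: "\<kappa> * (2 * (a \<bullet> w) - \<kappa> * (norm a)\<^sup>2) \<le> (norm w)\<^sup>2"
    unfolding norm_sq_diff_scaleR by (simp add: inner_commute power2_eq_square algebra_simps)
  have "\<kappa> * ((norm a)\<^sup>2 + 2 * \<gamma> * (K a \<bullet> (u' - us))) \<le> \<kappa> * (2 * (a \<bullet> w) - \<kappa> * (norm a)\<^sup>2)"
    using G \<kappa> mult_right_mono[OF \<kappa>, of "(norm a)\<^sup>2"] by (intro mult_left_mono) (auto simp: algebra_simps)
  also have "\<dots> \<le> (norm w)\<^sup>2" by (rule AM_GM)
  also have "\<dots> \<le> max ((1 - \<gamma> * \<mu>\<^sub>f)\<^sup>2) ((\<gamma> * L - 1)\<^sup>2) * (norm (x' - xs))\<^sup>2"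
    unfolding w_def
    by (rule gradient_step_contraction[OF f_deriv gradf_lipschitz f_strongly_convex \<mu>\<^sub>f_nonneg \<mu>\<^sub>f_le_L \<gamma>_pos])
  also have "\<dots> \<le> (\<kappa> * rate) * (norm (x' - xs))\<^sup>2"
  proof (rule mult_right_mono)
    have "max ((1 - \<gamma> * \<mu>\<^sub>f)\<^sup>2) ((\<gamma> * L - 1)\<^sup>2) / \<kappa> \<le> rate"
      unfolding rate_def \<kappa>_def using \<kappa> by (simp add: \<kappa>_def max_divide_distrib_right)
    then show "max ((1 - \<gamma> * \<mu>\<^sub>f)\<^sup>2) ((\<gamma> * L - 1)\<^sup>2) \<le> \<kappa> * rate"
      using \<kappa> by (simp add: divide_le_eq mult.commute)
  qed simp
  finally have "(norm a)\<^sup>2 + 2 * \<gamma> * (K a \<bullet> (u' - us)) \<le> rate * (norm (x' - xs))\<^sup>2"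
    using \<kappa> by (simp add: mult.assoc)
  then have "(1 / \<gamma>) * ((norm a)\<^sup>2 + 2 * \<gamma> * (K a \<bullet> (u' - us))) \<le> (1 / \<gamma>) * (rate * (norm (x' - xs))\<^sup>2)"
    using \<gamma>_pos by (intro mult_left_mono) simp_all
  then show ?thesis using \<gamma>_pos by (simp add: distrib_left)
qed

text \<open>With \<open>r = b - d\<close>, the step-size condition turns the extra noise terms into \<open>\<parallel>r\<parallel>\<^sup>2 / \<tau>\<close>,
  which strong monotonicity of \<open>prox \<tau> (conjugate h)\<close> absorbs.\<close>

lemma dual_step_bound:
  fixes a :: 'x and b d :: 'u
  assumes H: "(1 + \<tau> * \<mu>\<^sub>h) * (norm b)\<^sup>2 \<le> b \<bullet> (d + \<tau> *\<^sub>R K a)"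
  shows "(1 / \<gamma>) * (norm (a - \<gamma> *\<^sub>R adjoint K (b - d)))\<^sup>2
      + (1 + \<omega>) * dual_weight * (norm (d + (1 / (1 + \<omega>)) *\<^sub>R (b - d)))\<^sup>2
      + \<gamma> * (\<omega>\<^sub>r\<^sub>a\<^sub>n * (norm (b - d))\<^sup>2 - \<zeta> * (norm (adjoint K (b - d)))\<^sup>2)
      + dual_weight * \<omega> / (1 + \<omega>) * (norm (b - d))\<^sup>2
    \<le> (1 / \<gamma>) * (norm a)\<^sup>2 + 2 * (K a \<bullet> d) + (1 / \<tau> + dual_weight * \<omega>) * (norm d)\<^sup>2"
proof -
  define r where "r = b - d"
  have \<omega>1: "1 + \<omega> \<noteq> 0" using \<omega>_nonneg by simp
  have adj: "adjoint K r \<bullet> a = K a \<bullet> r" by (simp add: adjoint_works[OF lin] inner_commute)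
  have step: "\<gamma> * ((1 - \<zeta>) * (norm (adjoint K r))\<^sup>2 + \<omega>\<^sub>r\<^sub>a\<^sub>n * (norm r)\<^sup>2) \<le> (norm r)\<^sup>2 / \<tau>"
  proof -
    have "(norm (adjoint K r))\<^sup>2 \<le> (onorm K)\<^sup>2 * (norm r)\<^sup>2"
      using norm_adjoint_le[of r] by (simp add: power_mult_distrib[symmetric] power_mono)
    then have "(1 - \<zeta>) * (norm (adjoint K r))\<^sup>2 \<le> (1 - \<zeta>) * ((onorm K)\<^sup>2 * (norm r)\<^sup>2)"
      using \<zeta>_le_1 by (intro mult_left_mono) auto
    then have "\<gamma> * ((1 - \<zeta>) * (norm (adjoint K r))\<^sup>2 + \<omega>\<^sub>r\<^sub>a\<^sub>n * (norm r)\<^sup>2)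
        \<le> \<gamma> * ((1 - \<zeta>) * ((onorm K)\<^sup>2 * (norm r)\<^sup>2) + \<omega>\<^sub>r\<^sub>a\<^sub>n * (norm r)\<^sup>2)"
      using \<gamma>_pos by (simp add: mult_left_mono)
    also have "\<dots> = \<gamma> * ((1 - \<zeta>) * (onorm K)\<^sup>2 + \<omega>\<^sub>r\<^sub>a\<^sub>n) * (norm r)\<^sup>2"
      by (simp add: algebra_simps)
    also have "\<dots> \<le> (1 / \<tau>) * (norm r)\<^sup>2"
    proof (rule mult_right_mono)
      show "\<gamma> * ((1 - \<zeta>) * (onorm K)\<^sup>2 + \<omega>\<^sub>r\<^sub>a\<^sub>n) \<le> 1 / \<tau>"
        using step_size \<tau>_pos by (simp add: le_divide_eq mult.commute mult.left_commute)
    qed simp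
    also have "\<dots> = (norm r)\<^sup>2 / \<tau>" by simp
    finally show ?thesis .
  qed
  have "(1 / \<tau>) * ((1 + \<tau> * \<mu>\<^sub>h) * (norm b)\<^sup>2) \<le> (1 / \<tau>) * (b \<bullet> d + \<tau> * (K a \<bullet> b))"
    using H \<tau>_pos by (intro mult_left_mono) (simp_all add: inner_add_right inner_commute)
  moreover have "(1 / \<tau>) * ((1 + \<tau> * \<mu>\<^sub>h) * (norm b)\<^sup>2) = (norm b)\<^sup>2 / \<tau> + \<mu>\<^sub>h * (norm b)\<^sup>2"
    and "(1 / \<tau>) * (b \<bullet> d + \<tau> * (K a \<bullet> b)) = (b \<bullet> d) / \<tau> + K a \<bullet> b"
    using \<tau>_pos by (simp_all add: field_simps)
  ultimately have H': "(norm b)\<^sup>2 / \<tau> + \<mu>\<^sub>h * (norm b)\<^sup>2 \<le> (b \<bullet> d) / \<tau> + K a \<bullet> b" by simp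
  have e1: "(1 / \<gamma>) * (norm (a - \<gamma> *\<^sub>R adjoint K r))\<^sup>2
      = (1 / \<gamma>) * (norm a)\<^sup>2 - 2 * (K a \<bullet> r) + \<gamma> * (norm (adjoint K r))\<^sup>2"
    using norm_sq_diff_scaleR[of 1 a \<gamma> "adjoint K r"] \<gamma>_pos
    by (simp add: adjoint_works[OF lin] field_simps power2_eq_square)
  have "(1 + \<omega>) * (norm (d + (1 / (1 + \<omega>)) *\<^sub>R r))\<^sup>2 + \<omega> / (1 + \<omega>) * (norm r)\<^sup>2
      = \<omega> * (norm d)\<^sup>2 + (norm b)\<^sup>2"
    using norm_sq_relaxed_step[OF \<omega>1, of d r] by (simp add: r_def)
  then have "dual_weight * ((1 + \<omega>) * (norm (d + (1 / (1 + \<omega>)) *\<^sub>R r))\<^sup>2 + \<omega> / (1 + \<omega>) * (norm r)\<^sup>2)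
      = dual_weight * (\<omega> * (norm d)\<^sup>2 + (norm b)\<^sup>2)"
    by simp
  then have e2: "(1 + \<omega>) * dual_weight * (norm (d + (1 / (1 + \<omega>)) *\<^sub>R r))\<^sup>2
      + dual_weight * \<omega> / (1 + \<omega>) * (norm r)\<^sup>2
      = dual_weight * \<omega> * (norm d)\<^sup>2 + dual_weight * (norm b)\<^sup>2"
    by (simp add: algebra_simps)
  have e3: "\<gamma> * (\<omega>\<^sub>r\<^sub>a\<^sub>n * (norm r)\<^sup>2 - \<zeta> * (norm (adjoint K r))\<^sup>2) + \<gamma> * (norm (adjoint K r))\<^sup>2
      = \<gamma> * ((1 - \<zeta>) * (norm (adjoint K r))\<^sup>2 + \<omega>\<^sub>r\<^sub>a\<^sub>n * (norm r)\<^sup>2)"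
    by (simp add: algebra_simps)
  have e4: "(norm r)\<^sup>2 / \<tau> = (norm b)\<^sup>2 / \<tau> - 2 * ((b \<bullet> d) / \<tau>) + (norm d)\<^sup>2 / \<tau>"
    unfolding r_def by (simp add: power2_norm_eq_inner inner_diff_left inner_diff_right inner_commute
        add_divide_distrib diff_divide_distrib)
  have e5: "dual_weight * (norm b)\<^sup>2 = (norm b)\<^sup>2 / \<tau> + 2 * (\<mu>\<^sub>h * (norm b)\<^sup>2)"
    unfolding dual_weight_def by (simp add: algebra_simps)
  have e6: "(1 / \<tau> + dual_weight * \<omega>) * (norm d)\<^sup>2 = (norm d)\<^sup>2 / \<tau> + dual_weight * \<omega> * (norm d)\<^sup>2"
    by (simp add: algebra_simps)
  have e7: "K a \<bullet> r = K a \<bullet> b - K a \<bullet> d" unfolding r_def by (simp add: inner_diff_right)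
  from e1 e2 e3 e4 e5 e6 e7 step H'
  show ?thesis unfolding r_def[symmetric] by linarith
qed

lemma dual_weight_rate: "1 / \<tau> + dual_weight * \<omega> \<le> rate * ((1 + \<omega>) * dual_weight)"
proof -
  define P where "P = 1 + \<omega>"
  define Q where "Q = 1 + 2 * \<tau> * \<mu>\<^sub>h"
  have "0 < \<tau> * \<mu>\<^sub>h" using \<tau>_pos \<mu>\<^sub>h_pos by simp
  then have "P \<noteq> 0" "Q \<noteq> 0" "\<tau> \<noteq> 0"
    unfolding P_def Q_def using \<tau>_pos \<omega>_nonneg by (simp_all add: mult.assoc)
  have dw: "dual_weight = Q / \<tau>" and \<omega>: "\<omega> = P - 1"
    unfolding dual_weight_def P_def Q_def using \<tau>_pos by (simp_all add: field_simps)
  have "1 / \<tau> + dual_weight * \<omega> = (1 + Q * (P - 1)) / \<tau>"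
    using \<open>\<tau> \<noteq> 0\<close> by (simp add: dw \<omega> field_simps)
  also have "\<dots> = (1 - (Q - 1) / (P * Q)) * (P * dual_weight)"
    using \<open>P \<noteq> 0\<close> \<open>Q \<noteq> 0\<close> \<open>\<tau> \<noteq> 0\<close> by (simp add: dw field_simps)
  also have "\<dots> = (1 - 2 * \<tau> * \<mu>\<^sub>h / ((1 + \<omega>) * (1 + 2 * \<tau> * \<mu>\<^sub>h))) * ((1 + \<omega>) * dual_weight)"
    by (simp add: P_def Q_def)
  finally have "1 / \<tau> + dual_weight * \<omega>
      = (1 - 2 * \<tau> * \<mu>\<^sub>h / ((1 + \<omega>) * (1 + 2 * \<tau> * \<mu>\<^sub>h))) * ((1 + \<omega>) * dual_weight)" .
  also have "\<dots> \<le> rate * ((1 + \<omega>) * dual_weight)"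
    using dual_weight_pos \<omega>_nonneg unfolding rate_def by (intro mult_right_mono) auto
  finally show ?thesis .
qed

lemma deterministic_contraction:
  "lyapunov (primal_update x' u') (dual_update x' u')
     + \<gamma> * (\<omega>\<^sub>r\<^sub>a\<^sub>n * (norm (dual_residual x' u'))\<^sup>2 - \<zeta> * (norm (adjoint K (dual_residual x' u')))\<^sup>2)
     + dual_weight * \<omega> / (1 + \<omega>) * (norm (dual_residual x' u'))\<^sup>2
   \<le> rate * lyapunov x' u'"
proof -
  define a where "a = primal_step x' u' - xs"
  define b where "b = prox \<tau> (conjugate h) (u' + \<tau> *\<^sub>R K (primal_step x' u')) - us"
  define d where "d = u' - us"
  have r: "dual_residual x' u' = b - d" by (simp add: dual_residual_def b_def d_def)
  have "(1 + \<tau> * \<mu>\<^sub>h) * (norm b)\<^sup>2 \<le> b \<bullet> ((u' + \<tau> *\<^sub>R K (primal_step x' u')) - (us + \<tau> *\<^sub>R K xs))"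
    using prox_h.prox_strongly_monotone dual_residual_solution
    unfolding b_def dual_residual_def primal_step_solution by (metis eq_iff_diff_eq_0)
  also have "\<dots> = b \<bullet> (d + \<tau> *\<^sub>R K a)"
    by (simp add: a_def d_def linear_diff[OF lin] algebra_simps)
  finally have "(1 / \<gamma>) * (norm (a - \<gamma> *\<^sub>R adjoint K (b - d)))\<^sup>2
      + (1 + \<omega>) * dual_weight * (norm (d + (1 / (1 + \<omega>)) *\<^sub>R (b - d)))\<^sup>2
      + \<gamma> * (\<omega>\<^sub>r\<^sub>a\<^sub>n * (norm (b - d))\<^sup>2 - \<zeta> * (norm (adjoint K (b - d)))\<^sup>2)
      + dual_weight * \<omega> / (1 + \<omega>) * (norm (b - d))\<^sup>2
    \<le> (1 / \<gamma>) * (norm a)\<^sup>2 + 2 * (K a \<bullet> d) + (1 / \<tau> + dual_weight * \<omega>) * (norm d)\<^sup>2"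
    by (rule dual_step_bound)
  also have "\<dots> \<le> rate * ((1 / \<gamma>) * (norm (x' - xs))\<^sup>2) + rate * ((1 + \<omega>) * dual_weight) * (norm d)\<^sup>2"
    using primal_step_bound[of x' u'] mult_right_mono[OF dual_weight_rate, of "(norm d)\<^sup>2"]
    unfolding a_def d_def by simp
  finally show ?thesis
    unfolding lyapunov_def primal_update_def dual_update_def r
    by (simp add: a_def d_def algebra_simps)
qed

definition lin_bounded :: "('x \<Rightarrow> 'u \<Rightarrow> 'a::real_normed_vector) \<Rightarrow> bool" where
  "lin_bounded F \<longleftrightarrow> (\<exists>\<alpha> \<beta>. \<forall>x' u'. norm (F x' u') \<le> \<alpha> * norm (x' - xs) + \<beta> * norm (u' - us))"

lemma lin_boundedI:
  "(\<And>x' u'. norm (F x' u') \<le> \<alpha> * norm (x' - xs) + \<beta> * norm (u' - us)) \<Longrightarrow> lin_bounded F"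
  unfolding lin_bounded_def by blast

lemma lin_bounded_le:
  assumes "lin_bounded G" "0 \<le> c" "\<And>x' u'. norm (F x' u') \<le> c * norm (G x' u')"
  shows "lin_bounded F"
proof -
  obtain \<alpha> \<beta> where G: "\<And>x' u'. norm (G x' u') \<le> \<alpha> * norm (x' - xs) + \<beta> * norm (u' - us)"
    using assms(1) unfolding lin_bounded_def by blast
  show ?thesis
  proof (rule lin_boundedI)
    fix x' u'
    have "norm (F x' u') \<le> c * (\<alpha> * norm (x' - xs) + \<beta> * norm (u' - us))"
      using assms(3)[of x' u'] mult_left_mono[OF G \<open>0 \<le> c\<close>] by (rule order_trans)
    then show "norm (F x' u') \<le> (c * \<alpha>) * norm (x' - xs) + (c * \<beta>) * norm (u' - us)"
      by (simp add: algebra_simps)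
  qed
qed

lemma lin_bounded_add:
  assumes "lin_bounded F" "lin_bounded G"
  shows "lin_bounded (\<lambda>x' u'. F x' u' + G x' u')"
proof -
  obtain \<alpha> \<beta> \<alpha>' \<beta>' where "\<And>x' u'. norm (F x' u') \<le> \<alpha> * norm (x' - xs) + \<beta> * norm (u' - us)"
    and "\<And>x' u'. norm (G x' u') \<le> \<alpha>' * norm (x' - xs) + \<beta>' * norm (u' - us)"
    using assms unfolding lin_bounded_def by blast
  then have "norm (F x' u' + G x' u') \<le> (\<alpha> * norm (x' - xs) + \<beta> * norm (u' - us))
      + (\<alpha>' * norm (x' - xs) + \<beta>' * norm (u' - us))" for x' u'
    by (meson add_mono norm_triangle_ineq order_trans)
  then have "norm (F x' u' + G x' u') \<le> (\<alpha> + \<alpha>') * norm (x' - xs) + (\<beta> + \<beta>') * norm (u' - us)" for x' u'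
    by (simp add: algebra_simps)
  then show ?thesis by (rule lin_boundedI)
qed

lemma lin_bounded_scaleR: "lin_bounded F \<Longrightarrow> lin_bounded (\<lambda>x' u'. c *\<^sub>R F x' u')"
  by (erule lin_bounded_le[where c = "\<bar>c\<bar>"]) simp_all

lemma lin_bounded_diff: "lin_bounded F \<Longrightarrow> lin_bounded G \<Longrightarrow> lin_bounded (\<lambda>x' u'. F x' u' - G x' u')"
  using lin_bounded_add[of F "\<lambda>x' u'. (-1) *\<^sub>R G x' u'"] lin_bounded_scaleR[of G "-1"] by simp

lemma lin_bounded_linear:
  "bounded_linear T \<Longrightarrow> lin_bounded F \<Longrightarrow> lin_bounded (\<lambda>x' u'. T (F x' u'))"
  by (rule lin_bounded_le[OF _ onorm_pos_le onorm])

lemma lin_bounded_primal_dist: "lin_bounded (\<lambda>x' u'. x' - xs)"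
  by (rule lin_boundedI[where \<alpha> = 1 and \<beta> = 0]) simp

lemma lin_bounded_dual_dist: "lin_bounded (\<lambda>x' u'. u' - us)"
  by (rule lin_boundedI[where \<alpha> = 0 and \<beta> = 1]) simp

lemma lin_bounded_primal_step: "lin_bounded (\<lambda>x' u'. primal_step x' u' - xs)"
proof (rule lin_bounded_le[where c = 1])
  have "lin_bounded (\<lambda>x' u'. gradf x' - gradf xs)"
    using gradf_lipschitz by (intro lin_boundedI[where \<beta> = 0]) simp
  from lin_bounded_diff[OF lin_bounded_diff[OF lin_bounded_primal_dist lin_bounded_scaleR[OF this, where c = \<gamma>]]
      lin_bounded_scaleR[OF lin_bounded_linear[OF bounded_linear_adjoint lin_bounded_dual_dist], where c = \<gamma>]]
  show "lin_bounded (\<lambda>x' u'. (x' - \<gamma> *\<^sub>R gradf x' - \<gamma> *\<^sub>R adjoint K u') - (xs - \<gamma> *\<^sub>R gradf xs - \<gamma> *\<^sub>R adjoint K us))"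
    by (simp add: linear_diff[OF adjoint_linear[OF lin]] algebra_simps)
  show "norm (primal_step x' u' - xs)
      \<le> 1 * norm ((x' - \<gamma> *\<^sub>R gradf x' - \<gamma> *\<^sub>R adjoint K u') - (xs - \<gamma> *\<^sub>R gradf xs - \<gamma> *\<^sub>R adjoint K us))"
    for x' u'
    using prox_g.prox_nonexpansive[of "x' - \<gamma> *\<^sub>R gradf x' - \<gamma> *\<^sub>R adjoint K u'"
        "xs - \<gamma> *\<^sub>R gradf xs - \<gamma> *\<^sub>R adjoint K us"] primal_step_solution
    unfolding primal_step_def by simp
qed simp

lemma lin_bounded_dual_residual: "lin_bounded dual_residual"
proof -
  have "lin_bounded (\<lambda>x' u'. prox \<tau> (conjugate h) (u' + \<tau> *\<^sub>R K (primal_step x' u')) - us)"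
  proof (rule lin_bounded_le[where c = 1])
    show "lin_bounded (\<lambda>x' u'. (u' - us) + \<tau> *\<^sub>R K (primal_step x' u' - xs))"
      by (intro lin_bounded_add lin_bounded_dual_dist lin_bounded_scaleR lin_bounded_linear[OF bounded_linear_K]
          lin_bounded_primal_step)
    have "prox \<tau> (conjugate h) (us + \<tau> *\<^sub>R K xs) = us"
      using dual_residual_solution unfolding dual_residual_def primal_step_solution by simp
    then show "norm (prox \<tau> (conjugate h) (u' + \<tau> *\<^sub>R K (primal_step x' u')) - us)
        \<le> 1 * norm ((u' - us) + \<tau> *\<^sub>R K (primal_step x' u' - xs))" for x' u'
      using prox_h.prox_nonexpansive[of "u' + \<tau> *\<^sub>R K (primal_step x' u')" "us + \<tau> *\<^sub>R K xs"]
      by (simp add: linear_diff[OF lin] algebra_simps)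
  qed simp
  from lin_bounded_diff[OF this lin_bounded_dual_dist] show ?thesis
    by (simp add: dual_residual_def[abs_def])
qed

lemma lin_bounded_primal_update: "lin_bounded (\<lambda>x' u'. primal_update x' u' - xs)"
  using lin_bounded_diff[OF lin_bounded_primal_step
      lin_bounded_scaleR[OF lin_bounded_linear[OF bounded_linear_adjoint lin_bounded_dual_residual], of \<gamma>]]
  by (simp add: primal_update_def algebra_simps)

lemma lin_bounded_dual_update: "lin_bounded (\<lambda>x' u'. dual_update x' u' - us)"
  using lin_bounded_add[OF lin_bounded_dual_dist lin_bounded_scaleR[OF lin_bounded_dual_residual]]
  by (simp add: dual_update_def algebra_simps)

lemma lin_bounded_noise_weight: "lin_bounded noise_weight"
  using lin_bounded_diff[OF lin_bounded_scaleR[OF lin_bounded_dual_update]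
      lin_bounded_scaleR[OF lin_bounded_linear[OF bounded_linear_K lin_bounded_primal_update]]]
  by (simp add: noise_weight_def[abs_def])

lemma lyapunov_nonneg: "0 \<le> lyapunov x' u'"
  unfolding lyapunov_def using \<gamma>_pos \<omega>_nonneg dual_weight_pos by simp

lemma lin_bounded_sq_le_lyapunov:
  assumes "lin_bounded F"
  obtains k where "\<And>x' u'. (norm (F x' u'))\<^sup>2 \<le> k * lyapunov x' u'"
proof -
  obtain \<alpha> \<beta> where F: "\<And>x' u'. norm (F x' u') \<le> \<alpha> * norm (x' - xs) + \<beta> * norm (u' - us)"
    using assms unfolding lin_bounded_def by blast
  define c where "c = (1 + \<omega>) * dual_weight"
  have c: "0 < c" unfolding c_def using \<omega>_nonneg dual_weight_pos by simp
  have "(norm (F x' u'))\<^sup>2 \<le> (2 * \<alpha>\<^sup>2 * \<gamma> + 2 * \<beta>\<^sup>2 / c) * lyapunov x' u'" for x' u'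
  proof -
    have "\<alpha> * norm (x' - xs) \<le> \<bar>\<alpha>\<bar> * norm (x' - xs)" "\<beta> * norm (u' - us) \<le> \<bar>\<beta>\<bar> * norm (u' - us)"
      by (simp_all add: mult_right_mono)
    with F[of x' u'] have "norm (F x' u') \<le> \<bar>\<alpha>\<bar> * norm (x' - xs) + \<bar>\<beta>\<bar> * norm (u' - us)"
      by linarith
    then have "(norm (F x' u'))\<^sup>2 \<le> (\<bar>\<alpha>\<bar> * norm (x' - xs) + \<bar>\<beta>\<bar> * norm (u' - us))\<^sup>2"
      by (simp add: power_mono)
    also have "\<dots> \<le> 2 * \<alpha>\<^sup>2 * (norm (x' - xs))\<^sup>2 + 2 * \<beta>\<^sup>2 * (norm (u' - us))\<^sup>2"
      using sum_squares_bound[of "\<bar>\<alpha>\<bar> * norm (x' - xs)" "\<bar>\<beta>\<bar> * norm (u' - us)"]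
      by (simp add: power2_sum power_mult_distrib)
    also have "\<dots> = (2 * \<alpha>\<^sup>2 * \<gamma>) * ((1 / \<gamma>) * (norm (x' - xs))\<^sup>2) + (2 * \<beta>\<^sup>2 / c) * (c * (norm (u' - us))\<^sup>2)"
      using \<gamma>_pos c by simp
    also have "\<dots> \<le> (2 * \<alpha>\<^sup>2 * \<gamma>) * lyapunov x' u' + (2 * \<beta>\<^sup>2 / c) * lyapunov x' u'"
    proof (intro add_mono mult_left_mono)
      show "(1 / \<gamma>) * (norm (x' - xs))\<^sup>2 \<le> lyapunov x' u'" "c * (norm (u' - us))\<^sup>2 \<le> lyapunov x' u'"
        unfolding lyapunov_def c_def using \<gamma>_pos \<omega>_nonneg dual_weight_pos by simp_all
    qed (use \<gamma>_pos c in simp_all)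
    also have "\<dots> = (2 * \<alpha>\<^sup>2 * \<gamma> + 2 * \<beta>\<^sup>2 / c) * lyapunov x' u'"
      by (simp add: distrib_right)
    finally show ?thesis .
  qed
  then show ?thesis using that by blast
qed

lemma continuous_on_primal_step: "continuous_on UNIV (\<lambda>p::'x \<times> 'u. primal_step (fst p) (snd p))"
proof -
  have "continuous_on UNIV gradf"
    by (rule lipschitz_on_continuous_on[where L = L])
       (use L_pos gradf_lipschitz in \<open>simp add: lipschitz_on_def dist_norm\<close>)
  then have "continuous_on UNIV (\<lambda>p::'x \<times> 'u. fst p - \<gamma> *\<^sub>R gradf (fst p) - \<gamma> *\<^sub>R adjoint K (snd p))"
    by (intro continuous_intros continuous_on_compose2[OF \<open>continuous_on UNIV gradf\<close>]
        continuous_on_compose2[OF linear_continuous_on[OF bounded_linear_adjoint]]) auto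
  then show ?thesis
    unfolding primal_step_def by (rule continuous_on_compose2[OF prox_g.continuous_on_prox]) auto
qed

lemma continuous_on_dual_residual: "continuous_on UNIV (\<lambda>p::'x \<times> 'u. dual_residual (fst p) (snd p))"
proof -
  have "continuous_on UNIV (\<lambda>p::'x \<times> 'u. snd p + \<tau> *\<^sub>R K (primal_step (fst p) (snd p)))"
    by (intro continuous_intros continuous_on_compose2[OF linear_continuous_on[OF bounded_linear_K]
        continuous_on_primal_step]) auto
  then have "continuous_on UNIV (\<lambda>p::'x \<times> 'u. prox \<tau> (conjugate h) (snd p + \<tau> *\<^sub>R K (primal_step (fst p) (snd p))))"
    by (rule continuous_on_compose2[OF prox_h.continuous_on_prox]) auto
  then show ?thesis unfolding dual_residual_def by (intro continuous_intros)
qed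

lemma continuous_on_updates:
  "continuous_on UNIV (\<lambda>p::'x \<times> 'u. primal_update (fst p) (snd p))"
  "continuous_on UNIV (\<lambda>p::'x \<times> 'u. dual_update (fst p) (snd p))"
  "continuous_on UNIV (\<lambda>p::'x \<times> 'u. noise_weight (fst p) (snd p))"
  "continuous_on UNIV (\<lambda>p::'x \<times> 'u. lyapunov (fst p) (snd p))"
proof -
  have adj: "continuous_on UNIV (\<lambda>p::'x \<times> 'u. adjoint K (dual_residual (fst p) (snd p)))"
    by (rule continuous_on_compose2[OF linear_continuous_on[OF bounded_linear_adjoint]
        continuous_on_dual_residual]) auto
  show pu: "continuous_on UNIV (\<lambda>p::'x \<times> 'u. primal_update (fst p) (snd p))"
    unfolding primal_update_def by (intro continuous_intros continuous_on_primal_step adj)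
  show du: "continuous_on UNIV (\<lambda>p::'x \<times> 'u. dual_update (fst p) (snd p))"
    unfolding dual_update_def by (intro continuous_intros continuous_on_dual_residual)
  have "continuous_on UNIV (\<lambda>p::'x \<times> 'u. K (primal_update (fst p) (snd p) - xs))"
    by (rule continuous_on_compose2[OF linear_continuous_on[OF bounded_linear_K]])
       (auto intro!: continuous_intros pu)
  then show "continuous_on UNIV (\<lambda>p::'x \<times> 'u. noise_weight (fst p) (snd p))"
    unfolding noise_weight_def by (intro continuous_intros du)
  show "continuous_on UNIV (\<lambda>p::'x \<times> 'u. lyapunov (fst p) (snd p))"
    unfolding lyapunov_def by (intro continuous_intros)
qed

lemma xhat_primal_step: "xhat t s = primal_step (x t s) (u t s)"
  unfolding xhat_eq primal_step_def ..

lemma residual_eq: "prox \<tau> (conjugate h) (u t s + \<tau> *\<^sub>R K (xhat t s)) - u t s = dual_residual (x t s) (u t s)"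
  unfolding dual_residual_def xhat_primal_step ..

lemma measurable_iterates: "x t \<in> borel_measurable M \<and> u t \<in> borel_measurable M"
proof (induction t)
  case 0
  then show ?case by (simp add: x_0 u_0)
next
  case (Suc t)
  then have [measurable]: "x t \<in> borel_measurable M" "u t \<in> borel_measurable M" by auto
  have [measurable]: "R t \<in> borel_measurable M" by (rule R_measurable)
  have "(\<lambda>s. (x t s, u t s)) \<in> borel_measurable M" by measurable
  from borel_measurable_continuous_on[OF continuous_on_primal_step this]
  have [measurable]: "xhat t \<in> borel_measurable M" unfolding xhat_primal_step[abs_def] by simp
  have u': "u (Suc t) \<in> borel_measurable M" unfolding u_Suc[abs_def] by measurable
  note [measurable] = u'
  have "(\<lambda>s. adjoint K (u (Suc t) s)) \<in> borel_measurable M" "(\<lambda>s. adjoint K (u t s)) \<in> borel_measurable M"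
    using borel_measurable_continuous_on[OF linear_continuous_on[OF bounded_linear_adjoint]] by measurable
  then have "x (Suc t) \<in> borel_measurable M" unfolding x_Suc[abs_def] by measurable
  with u' show ?case by simp
qed

lemma measurable_state:
  fixes F :: "'x \<times> 'u \<Rightarrow> 'b::topological_space"
  assumes "continuous_on UNIV F"
  shows "(\<lambda>s. F (x t s, u t s)) \<in> borel_measurable M"
    and "(\<lambda>s. F (x t s, u t s)) \<in> borel_measurable (filt t)"
proof -
  have [measurable]: "x t \<in> borel_measurable M" "u t \<in> borel_measurable M"
    using measurable_iterates by auto
  have "(\<lambda>s. (x t s, u t s)) \<in> borel_measurable M" by measurable
  then show "(\<lambda>s. F (x t s, u t s)) \<in> borel_measurable M"
    by (rule borel_measurable_continuous_on[OF assms])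
  show "(\<lambda>s. F (x t s, u t s)) \<in> borel_measurable (filt t)"
    unfolding filt_def
    by (rule borel_measurable_continuous_on[OF assms measurable_gen_filtration[of "\<lambda>i s. (x i s, u i s)"]])
qed

lemma sigma_finite_subalgebra_filt: "sigma_finite_subalgebra M (filt t)"
proof -
  have "(\<lambda>s. (x i s, u i s)) \<in> borel_measurable M" for i
    using measurable_state(1)[OF continuous_on_id, of i] by simp
  then show ?thesis unfolding filt_def by (rule sigma_finite_subalgebra_gen_filtration[OF prob])
qed

definition noise :: "nat \<Rightarrow> 's \<Rightarrow> 'u" where
  "noise t s = R t s - dual_residual (x t s) (u t s)"

lemma lyapunov_perturb:
  "lyapunov (p - \<gamma> *\<^sub>R adjoint K N) (q + (1 / (1 + \<omega>)) *\<^sub>R N)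
   = lyapunov p q + ((2 * dual_weight) *\<^sub>R (q - us) - 2 *\<^sub>R K (p - xs)) \<bullet> N
     + \<gamma> * (norm (adjoint K N))\<^sup>2 + dual_weight / (1 + \<omega>) * (norm N)\<^sup>2"
proof -
  have scalar: "(1 / \<gamma>) * (A - 2 * \<gamma> * P + \<gamma>\<^sup>2 * S)
      + (1 + \<omega>) * dual_weight * (B + 2 * (1 / (1 + \<omega>)) * Q + (1 / (1 + \<omega>))\<^sup>2 * T)
      = (1 / \<gamma>) * A + (1 + \<omega>) * dual_weight * B + (2 * dual_weight * Q - 2 * P) + \<gamma> * S
        + dual_weight / (1 + \<omega>) * T" for A P S B Q T
  proof -
    define t where "t = 1 / (1 + \<omega>)"
    define i where "i = 1 / \<gamma>"
    have t: "t * (1 + \<omega>) = 1" and dw: "dual_weight / (1 + \<omega>) = dual_weight * t"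
      using \<omega>_nonneg by (simp_all add: t_def)
    have i: "i * \<gamma> = 1" using \<gamma>_pos by (simp add: i_def)
    show ?thesis unfolding t_def[symmetric] i_def[symmetric] dw using t i by algebra
  qed
  have "(norm (p - \<gamma> *\<^sub>R adjoint K N - xs))\<^sup>2
      = (norm (p - xs))\<^sup>2 - 2 * \<gamma> * (K (p - xs) \<bullet> N) + \<gamma>\<^sup>2 * (norm (adjoint K N))\<^sup>2"
    using norm_sq_diff_scaleR[of 1 "p - xs" \<gamma> "adjoint K N"]
    by (simp add: adjoint_works[OF lin] algebra_simps)
  moreover have "(norm (q + (1 / (1 + \<omega>)) *\<^sub>R N - us))\<^sup>2
      = (norm (q - us))\<^sup>2 + 2 * (1 / (1 + \<omega>)) * ((q - us) \<bullet> N) + (1 / (1 + \<omega>))\<^sup>2 * (norm N)\<^sup>2"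
    using norm_sq_add_scaleR[of "q - us" "1 / (1 + \<omega>)" N] by (simp add: algebra_simps)
  moreover have "((2 * dual_weight) *\<^sub>R (q - us) - 2 *\<^sub>R K (p - xs)) \<bullet> N
      = 2 * dual_weight * ((q - us) \<bullet> N) - 2 * (K (p - xs) \<bullet> N)"
    by (simp add: inner_diff_left)
  ultimately show ?thesis
    unfolding lyapunov_def by (simp only: scalar)
qed

lemma lyapunov_Suc:
  "lyapunov (x (Suc t) s) (u (Suc t) s)
   = lyapunov (primal_update (x t s) (u t s)) (dual_update (x t s) (u t s))
     + noise_weight (x t s) (u t s) \<bullet> noise t s + \<gamma> * (norm (adjoint K (noise t s)))\<^sup>2
     + dual_weight / (1 + \<omega>) * (norm (noise t s))\<^sup>2"
proof -
  have "adjoint K (u (Suc t) s) - adjoint K (u t s) = (1 / (1 + \<omega>)) *\<^sub>R adjoint K (R t s)"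
    using linear_add[OF adjoint_linear[OF lin]] linear_scale[OF adjoint_linear[OF lin]] by (simp add: u_Suc)
  then have "x (Suc t) s = primal_step (x t s) (u t s) - \<gamma> *\<^sub>R adjoint K (R t s)"
    using \<omega>_nonneg by (simp add: x_Suc xhat_primal_step)
  also have "adjoint K (R t s) = adjoint K (dual_residual (x t s) (u t s)) + adjoint K (noise t s)"
    by (simp add: noise_def flip: linear_add[OF adjoint_linear[OF lin]])
  finally have "x (Suc t) s = primal_update (x t s) (u t s) - \<gamma> *\<^sub>R adjoint K (noise t s)"
    by (simp add: primal_update_def scaleR_right_distrib algebra_simps)
  moreover have "u (Suc t) s = dual_update (x t s) (u t s) + (1 / (1 + \<omega>)) *\<^sub>R noise t s"
    by (simp add: u_Suc dual_update_def noise_def algebra_simps)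
  ultimately show ?thesis by (simp add: lyapunov_perturb noise_weight_def)
qed

lemma integrable_sq_of_lin_bounded:
  assumes P: "integrable M (\<lambda>s. lyapunov (x t s) (u t s))" and F: "lin_bounded F"
    and c: "continuous_on UNIV (\<lambda>p. F (fst p) (snd p))"
  shows "integrable M (\<lambda>s. (norm (F (x t s) (u t s)))\<^sup>2)"
proof -
  obtain k where k: "\<And>x' u'. (norm (F x' u'))\<^sup>2 \<le> k * lyapunov x' u'"
    using lin_bounded_sq_le_lyapunov[OF F] by blast
  have [measurable]: "(\<lambda>s. F (x t s) (u t s)) \<in> borel_measurable M"
    using measurable_state(1)[OF c, of t] by simp
  show ?thesis
  proof (rule Bochner_Integration.integrable_bound[OF integrable_mult_right[OF P, of k]])
    have "(norm (F (x t s) (u t s)))\<^sup>2 \<le> \<bar>k\<bar> * lyapunov (x t s) (u t s)" for s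
      using k[of "x t s" "u t s"] mult_right_mono[OF abs_ge_self lyapunov_nonneg] by (rule order_trans)
    then show "AE s in M. norm ((norm (F (x t s) (u t s)))\<^sup>2) \<le> norm (k * lyapunov (x t s) (u t s))"
      using lyapunov_nonneg by (simp add: abs_mult)
  qed measurable
qed

lemma measurable_noise [measurable]: "noise t \<in> borel_measurable M"
proof -
  have [measurable]: "R t \<in> borel_measurable M" by (rule R_measurable)
  have [measurable]: "(\<lambda>s. dual_residual (x t s) (u t s)) \<in> borel_measurable M"
    using measurable_state(1)[OF continuous_on_dual_residual, of t] by simp
  show ?thesis unfolding noise_def[abs_def] by measurable
qed

lemma noise_moments:
  assumes P: "integrable M (\<lambda>s. lyapunov (x t s) (u t s))"
  defines "r \<equiv> \<lambda>s. dual_residual (x t s) (u t s)"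
  shows "integrable M (\<lambda>s. (norm (noise t s))\<^sup>2)"
    and "(\<integral>s. (norm (noise t s))\<^sup>2 \<partial>M) \<le> \<omega> * (\<integral>s. (norm (r s))\<^sup>2 \<partial>M)"
    and "integrable M (\<lambda>s. (norm (adjoint K (noise t s)))\<^sup>2)"
    and "(\<integral>s. (norm (adjoint K (noise t s)))\<^sup>2 \<partial>M) + \<zeta> * (\<integral>s. (norm (adjoint K (r s)))\<^sup>2 \<partial>M)
         \<le> \<omega>\<^sub>r\<^sub>a\<^sub>n * (\<integral>s. (norm (r s))\<^sup>2 \<partial>M)"
proof -
  have [measurable]: "r \<in> borel_measurable M"
    using measurable_state(1)[OF continuous_on_dual_residual, of t] by (simp add: r_def)
  have [measurable]: "(\<lambda>s. adjoint K (noise t s)) \<in> borel_measurable M"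
    "(\<lambda>s. adjoint K (r s)) \<in> borel_measurable M"
    using borel_measurable_continuous_on[OF linear_continuous_on[OF bounded_linear_adjoint]] by measurable
  have ir: "integrable M (\<lambda>s. (norm (r s))\<^sup>2)"
    unfolding r_def by (rule integrable_sq_of_lin_bounded[OF P lin_bounded_dual_residual continuous_on_dual_residual])
  have le1: "AE s in M. nn_cond_exp M (filt t) (\<lambda>s. ennreal ((norm (noise t s))\<^sup>2)) s + ennreal 0
      \<le> ennreal (\<omega> * (norm (r s))\<^sup>2)"
    using R_cond_var[of t] unfolding residual_eq filt_def[symmetric] noise_def[symmetric] r_def by simp
  have m1: "(\<lambda>s. (norm (noise t s))\<^sup>2) \<in> borel_measurable M" by measurable
  have g1: "0 \<le> \<omega> * (norm (r s))\<^sup>2" for s using \<omega>_nonneg by simp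
  note n1 = integral_le_of_nn_cond_exp_le[OF sigma_finite_subalgebra_filt m1 borel_measurable_const
      zero_le_power2 order_refl g1 integrable_mult_right[OF ir] le1]
  then show "integrable M (\<lambda>s. (norm (noise t s))\<^sup>2)"
    and "(\<integral>s. (norm (noise t s))\<^sup>2 \<partial>M) \<le> \<omega> * (\<integral>s. (norm (r s))\<^sup>2 \<partial>M)"
    by simp_all
  have le2: "AE s in M. nn_cond_exp M (filt t) (\<lambda>s. ennreal ((norm (adjoint K (noise t s)))\<^sup>2)) s
      + ennreal (\<zeta> * (norm (adjoint K (r s)))\<^sup>2) \<le> ennreal (\<omega>\<^sub>r\<^sub>a\<^sub>n * (norm (r s))\<^sup>2)"
    using R_cond_var_adjoint[of t] unfolding residual_eq filt_def[symmetric] noise_def[symmetric] r_def .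
  have m2: "(\<lambda>s. (norm (adjoint K (noise t s)))\<^sup>2) \<in> borel_measurable M" by measurable
  have m3: "(\<lambda>s. \<zeta> * (norm (adjoint K (r s)))\<^sup>2) \<in> borel_measurable M" by measurable
  have e2: "0 \<le> \<zeta> * (norm (adjoint K (r s)))\<^sup>2" and g2: "0 \<le> \<omega>\<^sub>r\<^sub>a\<^sub>n * (norm (r s))\<^sup>2" for s
    using \<zeta>_nonneg \<omega>\<^sub>r\<^sub>a\<^sub>n_nonneg by simp_all
  note n2 = integral_le_of_nn_cond_exp_le[OF sigma_finite_subalgebra_filt m2 m3 zero_le_power2 e2 g2
      integrable_mult_right[OF ir] le2]
  then show "integrable M (\<lambda>s. (norm (adjoint K (noise t s)))\<^sup>2)"
    and "(\<integral>s. (norm (adjoint K (noise t s)))\<^sup>2 \<partial>M) + \<zeta> * (\<integral>s. (norm (adjoint K (r s)))\<^sup>2 \<partial>M)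
         \<le> \<omega>\<^sub>r\<^sub>a\<^sub>n * (\<integral>s. (norm (r s))\<^sup>2 \<partial>M)"
    by simp_all
qed

text \<open>The noise has conditional mean zero while its weight is \<open>filt t\<close>-measurable.\<close>

lemma noise_cross_term:
  assumes P: "integrable M (\<lambda>s. lyapunov (x t s) (u t s))"
  shows "integrable M (\<lambda>s. noise_weight (x t s) (u t s) \<bullet> noise t s)"
    and "(\<integral>s. noise_weight (x t s) (u t s) \<bullet> noise t s \<partial>M) = 0"
proof -
  define r where "r = (\<lambda>s. dual_residual (x t s) (u t s))"
  have [measurable]: "r \<in> borel_measurable M" "R t \<in> borel_measurable M"
    using measurable_state(1)[OF continuous_on_dual_residual, of t] R_measurable by (simp_all add: r_def)
  have ir: "integrable M (\<lambda>s. (norm (r s))\<^sup>2)"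
    unfolding r_def by (rule integrable_sq_of_lin_bounded[OF P lin_bounded_dual_residual continuous_on_dual_residual])
  have iR: "integrable M (\<lambda>s. (norm (R t s))\<^sup>2)"
  proof (rule Bochner_Integration.integrable_bound)
    show "integrable M (\<lambda>s. 2 * (norm (r s))\<^sup>2 + 2 * (norm (noise t s))\<^sup>2)"
      using ir noise_moments(1)[OF P] by simp
    have "R t s = r s + noise t s" for s by (simp add: noise_def r_def)
    then show "AE s in M. norm ((norm (R t s))\<^sup>2) \<le> norm (2 * (norm (r s))\<^sup>2 + 2 * (norm (noise t s))\<^sup>2)"
      using norm_sq_add_le[of "r _" "noise t _"] by (intro AE_I2) simp
  qed measurable
  have cond: "cond_exp_vec_eq M (filt t) (R t) r"
    using R_cond_mean[of t] unfolding residual_eq filt_def[symmetric] r_def[symmetric] .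
  have VF: "(\<lambda>s. noise_weight (x t s) (u t s)) \<in> borel_measurable (filt t)"
    using measurable_state(2)[OF continuous_on_updates(3), of t] by simp
  have rM: "r \<in> borel_measurable M" by measurable
  have RM: "R t \<in> borel_measurable M" by measurable
  note res = integral_inner_cond_exp_residual[OF sigma_finite_subalgebra_filt VF RM rM cond
      integrable_sq_of_lin_bounded[OF P lin_bounded_noise_weight continuous_on_updates(3)] iR ir]
  have "noise t s = R t s - r s" for s by (simp add: noise_def r_def)
  with res show "integrable M (\<lambda>s. noise_weight (x t s) (u t s) \<bullet> noise t s)"
    and "(\<integral>s. noise_weight (x t s) (u t s) \<bullet> noise t s \<partial>M) = 0"
    by simp_all
qed

lemma expected_lyapunov_step:
  assumes P: "integrable M (\<lambda>s. lyapunov (x t s) (u t s))"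
  shows "integrable M (\<lambda>s. lyapunov (x (Suc t) s) (u (Suc t) s))"
    and "(\<integral>s. lyapunov (x (Suc t) s) (u (Suc t) s) \<partial>M) \<le> rate * (\<integral>s. lyapunov (x t s) (u t s) \<partial>M)"
proof -
  define D where "D = (\<lambda>s. lyapunov (primal_update (x t s) (u t s)) (dual_update (x t s) (u t s)))"
  define c where "c = dual_weight / (1 + \<omega>)"
  have ir: "integrable M (\<lambda>s. (norm (dual_residual (x t s) (u t s)))\<^sup>2)"
    by (rule integrable_sq_of_lin_bounded[OF P lin_bounded_dual_residual continuous_on_dual_residual])
  have iKr: "integrable M (\<lambda>s. (norm (adjoint K (dual_residual (x t s) (u t s))))\<^sup>2)"
    by (rule integrable_sq_of_lin_bounded[OF P lin_bounded_linear[OF bounded_linear_adjoint lin_bounded_dual_residual]])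
       (rule continuous_on_compose2[OF linear_continuous_on[OF bounded_linear_adjoint] continuous_on_dual_residual], auto)
  have iD: "integrable M D"
  proof -
    have "integrable M (\<lambda>s. (norm (primal_update (x t s) (u t s) - xs))\<^sup>2)"
      "integrable M (\<lambda>s. (norm (dual_update (x t s) (u t s) - us))\<^sup>2)"
      by (rule integrable_sq_of_lin_bounded[OF P lin_bounded_primal_update],
          intro continuous_intros continuous_on_updates(1))
         (rule integrable_sq_of_lin_bounded[OF P lin_bounded_dual_update],
          intro continuous_intros continuous_on_updates(2))
    then show ?thesis unfolding D_def lyapunov_def by simp
  qed
  note N = noise_moments[OF P] and VN = noise_cross_term[OF P]
  have Suc: "lyapunov (x (Suc t) s) (u (Suc t) s)
      = D s + noise_weight (x t s) (u t s) \<bullet> noise t s + \<gamma> * (norm (adjoint K (noise t s)))\<^sup>2 + c * (norm (noise t s))\<^sup>2" for s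
    unfolding D_def c_def by (rule lyapunov_Suc)
  show "integrable M (\<lambda>s. lyapunov (x (Suc t) s) (u (Suc t) s))"
    unfolding Suc using iD VN(1) N(1,3) by simp
  have "(\<integral>s. lyapunov (x (Suc t) s) (u (Suc t) s) \<partial>M)
      = (\<integral>s. D s \<partial>M) + \<gamma> * (\<integral>s. (norm (adjoint K (noise t s)))\<^sup>2 \<partial>M)
        + c * (\<integral>s. (norm (noise t s))\<^sup>2 \<partial>M)"
    unfolding Suc using iD VN N(1,3) by simp
  also have "\<dots> \<le> (\<integral>s. D s \<partial>M)
        + \<gamma> * (\<omega>\<^sub>r\<^sub>a\<^sub>n * (\<integral>s. (norm (dual_residual (x t s) (u t s)))\<^sup>2 \<partial>M) - \<zeta> * (\<integral>s. (norm (adjoint K (dual_residual (x t s) (u t s))))\<^sup>2 \<partial>M))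
        + c * (\<omega> * (\<integral>s. (norm (dual_residual (x t s) (u t s)))\<^sup>2 \<partial>M))"
  proof -
    have "0 \<le> c" unfolding c_def using dual_weight_pos \<omega>_nonneg by simp
    with N(2,4) \<gamma>_pos show ?thesis by (intro add_mono mult_left_mono) auto
  qed
  also have "\<dots> = (\<integral>s. D s + \<gamma> * (\<omega>\<^sub>r\<^sub>a\<^sub>n * (norm (dual_residual (x t s) (u t s)))\<^sup>2 - \<zeta> * (norm (adjoint K (dual_residual (x t s) (u t s))))\<^sup>2)
        + dual_weight * \<omega> / (1 + \<omega>) * (norm (dual_residual (x t s) (u t s)))\<^sup>2 \<partial>M)"
    using iD ir iKr by (simp add: c_def algebra_simps)
  also have "\<dots> \<le> (\<integral>s. rate * lyapunov (x t s) (u t s) \<partial>M)"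
    using iD ir iKr P deterministic_contraction unfolding D_def by (intro integral_mono) auto
  finally show "(\<integral>s. lyapunov (x (Suc t) s) (u (Suc t) s) \<partial>M) \<le> rate * (\<integral>s. lyapunov (x t s) (u t s) \<partial>M)"
    by simp
qed

lemma expected_lyapunov_le:
  "integrable M (\<lambda>s. lyapunov (x t s) (u t s))
   \<and> (\<integral>s. lyapunov (x t s) (u t s) \<partial>M) \<le> rate ^ t * lyapunov x0 u0"
proof (induction t)
  case 0
  interpret prob_space M by (rule prob)
  show ?case by (simp add: x_0 u_0 prob_space)
next
  case (Suc t)
  then have "(\<integral>s. lyapunov (x (Suc t) s) (u (Suc t) s) \<partial>M) \<le> rate * (rate ^ t * lyapunov x0 u0)"
    using expected_lyapunov_step(2)[of t] rate_pos by (meson less_imp_le mult_left_mono order_trans)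
  with Suc expected_lyapunov_step(1)[of t] show ?case by simp
qed

lemma nn_integral_lyapunov_le:
  "(\<integral>\<^sup>+ s. ennreal (lyapunov (x t s) (u t s)) \<partial>M) \<le> ennreal (rate ^ t * lyapunov x0 u0)"
  using expected_lyapunov_le[of t] lyapunov_nonneg by (simp add: nn_integral_eq_integral ennreal_leI)

lemma AE_lyapunov_tendsto_0: "AE s in M. (\<lambda>t. lyapunov (x t s) (u t s)) \<longlonglongrightarrow> 0"
proof (rule AE_LIMSEQ_0_of_nn_integral_summable[OF _ lyapunov_nonneg nn_integral_lyapunov_le])
  show "(\<lambda>s. lyapunov (x t s) (u t s)) \<in> borel_measurable M" for t
    using measurable_state(1)[OF continuous_on_updates(4), of t] by simp
  show "summable (\<lambda>t. rate ^ t * lyapunov x0 u0)"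
    using rate_pos rate_less_1 by (intro summable_mult2 summable_geometric) simp
  show "0 \<le> rate ^ t * lyapunov x0 u0" for t
    using rate_pos lyapunov_nonneg by simp
qed

lemma AE_iterates_tendsto:
  "AE s in M. (\<lambda>t. x t s) \<longlonglongrightarrow> xs \<and> (\<lambda>t. xhat t s) \<longlonglongrightarrow> xs \<and> (\<lambda>t. u t s) \<longlonglongrightarrow> us"
  using AE_lyapunov_tendsto_0
proof (rule AE_mp, intro AE_I2 impI)
  fix s assume P: "(\<lambda>t. lyapunov (x t s) (u t s)) \<longlonglongrightarrow> 0"
  have "(norm (x t s - xs))\<^sup>2 \<le> \<gamma> * lyapunov (x t s) (u t s)" for t
    using \<gamma>_pos \<omega>_nonneg dual_weight_pos unfolding lyapunov_def by (simp add: field_simps)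
  then have x: "(\<lambda>t. x t s) \<longlonglongrightarrow> xs" by (rule LIMSEQ_of_norm_sq_le[OF _ P]) (use \<gamma>_pos in simp)
  define c where "c = (1 + \<omega>) * dual_weight"
  have c: "0 < c" unfolding c_def using \<omega>_nonneg dual_weight_pos by simp
  have "(norm (u t s - us))\<^sup>2 \<le> (1 / c) * lyapunov (x t s) (u t s)" for t
  proof -
    have "c * (norm (u t s - us))\<^sup>2 \<le> lyapunov (x t s) (u t s)"
      using \<gamma>_pos unfolding lyapunov_def c_def by simp
    then have "(1 / c) * (c * (norm (u t s - us))\<^sup>2) \<le> (1 / c) * lyapunov (x t s) (u t s)"
      using c by (intro mult_left_mono) simp_all
    then show ?thesis using c by simp
  qed
  then have u: "(\<lambda>t. u t s) \<longlonglongrightarrow> us"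
    by (rule LIMSEQ_of_norm_sq_le[OF _ P]) (use c in simp)
  have "(\<lambda>t. x (Suc t) s + (\<gamma> * (1 + \<omega>)) *\<^sub>R (adjoint K (u (Suc t) s) - adjoint K (u t s)))
      \<longlonglongrightarrow> xs + (\<gamma> * (1 + \<omega>)) *\<^sub>R (adjoint K us - adjoint K us)"
    using linear_continuous_at[OF bounded_linear_adjoint]
    by (intro tendsto_intros LIMSEQ_Suc[OF x] isCont_tendsto_compose[OF _ LIMSEQ_Suc[OF u]]
        isCont_tendsto_compose[OF _ u])
  then have "(\<lambda>t. xhat t s) \<longlonglongrightarrow> xs" by (simp add: x_Suc)
  with x u show "(\<lambda>t. x t s) \<longlonglongrightarrow> xs \<and> (\<lambda>t. xhat t s) \<longlonglongrightarrow> xs \<and> (\<lambda>t. u t s) \<longlonglongrightarrow> us"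
    by blast
qed

end

theorem theorem1:
  fixes M :: "'s measure"
    and K :: "'x::euclidean_space \<Rightarrow> 'u::euclidean_space"
    and f :: "'x \<Rightarrow> real" and gradf :: "'x \<Rightarrow> 'x"
    and g :: "'x \<Rightarrow> ereal" and h :: "'u \<Rightarrow> ereal"
    and L\<^sub>f \<mu>\<^sub>f \<mu>\<^sub>g \<mu>\<^sub>h \<gamma> \<tau> \<omega> \<omega>\<^sub>r\<^sub>a\<^sub>n \<zeta> :: real
    and x0 :: 'x and u0 :: 'u
    and x xhat :: "nat \<Rightarrow> 's \<Rightarrow> 'x" and u R :: "nat \<Rightarrow> 's \<Rightarrow> 'u"
    and xs :: 'x and us :: 'u
  assumes "prob_space M"
    and "linear K" and "K \<noteq> (\<lambda>_. 0)"
    and "convex_on UNIV f"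
    and "\<And>y. (f has_derivative (\<lambda>d. gradf y \<bullet> d)) (at y)"
    and "L\<^sub>f > 0" and "\<And>y z. norm (gradf y - gradf z) \<le> L\<^sub>f * norm (y - z)"
    and "proper_fun g" "closed_fun g" "convex_fun g"
    and "proper_fun h" "closed_fun h" "convex_fun h"
    and "\<mu>\<^sub>f \<ge> 0" "\<mu>\<^sub>g \<ge> 0" "\<mu>\<^sub>h \<ge> 0"
    and "convex_on UNIV (\<lambda>y. f y - \<mu>\<^sub>f / 2 * (norm y)\<^sup>2)"
    and "strongly_convex_fun \<mu>\<^sub>g g"
    and "strongly_convex_fun \<mu>\<^sub>h (conjugate h)"
    \<comment> \<open>standing assumption: existence of a primal-dual (KKT) pair\<close>
    and "\<exists>xa ua. - gradf xa - adjoint K ua \<in> subdiff g xa \<and> K xa \<in> subdiff (conjugate h) ua"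
    \<comment> \<open>xs solves the primal problem, us solves the dual problem\<close>
    and "\<And>y. ereal (f xs) + g xs + h (K xs) \<le> ereal (f y) + g y + h (K y)"
    and "\<And>v. conjugate (\<lambda>y. ereal (f y) + g y) (- adjoint K us) + conjugate h us
             \<le> conjugate (\<lambda>y. ereal (f y) + g y) (- adjoint K v) + conjugate h v"
    and "\<omega> \<ge> 0" "\<omega>\<^sub>r\<^sub>a\<^sub>n \<ge> 0" "0 \<le> \<zeta>" "\<zeta> \<le> 1"
    and "\<mu>\<^sub>f > 0 \<or> \<mu>\<^sub>g > 0" and "\<mu>\<^sub>h > 0"
    and "0 < \<gamma>" "\<gamma> < 2 / L\<^sub>f" "\<tau> > 0"
    and "\<gamma> * \<tau> * ((1 - \<zeta>) * (onorm K)\<^sup>2 + \<omega>\<^sub>r\<^sub>a\<^sub>n) \<le> 1"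
    \<comment> \<open>the iteration RandProx (with v^t = K^* u^t)\<close>
    and "x 0 = (\<lambda>s. x0)" "u 0 = (\<lambda>s. u0)"
    and "\<And>t s. xhat t s = prox \<gamma> g (x t s - \<gamma> *\<^sub>R gradf (x t s) - \<gamma> *\<^sub>R adjoint K (u t s))"
    and "\<And>t s. u (Suc t) s = u t s + (1 / (1 + \<omega>)) *\<^sub>R R t s"
    and "\<And>t s. x (Suc t) s = xhat t s - (\<gamma> * (1 + \<omega>)) *\<^sub>R (adjoint K (u (Suc t) s) - adjoint K (u t s))"
    and "\<And>t. R t \<in> borel_measurable M"
    \<comment> \<open>properties of the stochastic estimates R t = R^t(r^t), conditioned on F_t\<close>
    and "\<And>t. cond_exp_vec_eq M (gen_filtration M (\<lambda>i s. (x i s, u i s)) t) (R t)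
               (\<lambda>s. prox \<tau> (conjugate h) (u t s + \<tau> *\<^sub>R K (xhat t s)) - u t s)"
    and "\<And>t. AE s in M.
           nn_cond_exp M (gen_filtration M (\<lambda>i s. (x i s, u i s)) t)
             (\<lambda>s. ennreal ((norm (R t s - (prox \<tau> (conjugate h) (u t s + \<tau> *\<^sub>R K (xhat t s)) - u t s)))\<^sup>2)) s
           \<le> ennreal (\<omega> * (norm (prox \<tau> (conjugate h) (u t s + \<tau> *\<^sub>R K (xhat t s)) - u t s))\<^sup>2)"
    and "\<And>t. AE s in M.
           nn_cond_exp M (gen_filtration M (\<lambda>i s. (x i s, u i s)) t)
             (\<lambda>s. ennreal ((norm (adjoint K (R t s - (prox \<tau> (conjugate h) (u t s + \<tau> *\<^sub>R K (xhat t s)) - u t s))))\<^sup>2)) s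
           + ennreal (\<zeta> * (norm (adjoint K (prox \<tau> (conjugate h) (u t s + \<tau> *\<^sub>R K (xhat t s)) - u t s)))\<^sup>2)
           \<le> ennreal (\<omega>\<^sub>r\<^sub>a\<^sub>n * (norm (prox \<tau> (conjugate h) (u t s + \<tau> *\<^sub>R K (xhat t s)) - u t s))\<^sup>2)"
  defines "\<Psi> \<equiv> \<lambda>t s. (1 / \<gamma>) * (norm (x t s - xs))\<^sup>2 + (1 + \<omega>) * (1 / \<tau> + 2 * \<mu>\<^sub>h) * (norm (u t s - us))\<^sup>2"
    and "\<Psi>0 \<equiv> (1 / \<gamma>) * (norm (x0 - xs))\<^sup>2 + (1 + \<omega>) * (1 / \<tau> + 2 * \<mu>\<^sub>h) * (norm (u0 - us))\<^sup>2"
    and "c \<equiv> max (max ((1 - \<gamma> * \<mu>\<^sub>f)\<^sup>2 / (1 + \<gamma> * \<mu>\<^sub>g)) ((\<gamma> * L\<^sub>f - 1)\<^sup>2 / (1 + \<gamma> * \<mu>\<^sub>g)))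
                 (1 - 2 * \<tau> * \<mu>\<^sub>h / ((1 + \<omega>) * (1 + 2 * \<tau> * \<mu>\<^sub>h)))"
  shows "c < 1
    \<and> (\<forall>t. (\<integral>\<^sup>+ s. ennreal (\<Psi> t s) \<partial>M) \<le> ennreal (c ^ t * \<Psi>0))
    \<and> (AE s in M. (\<lambda>t. x t s) \<longlonglongrightarrow> xs \<and> (\<lambda>t. xhat t s) \<longlonglongrightarrow> xs \<and> (\<lambda>t. u t s) \<longlonglongrightarrow> us)"
proof -
  interpret randprox M K f gradf g h "L\<^sub>f" "\<mu>\<^sub>f" "\<mu>\<^sub>g" "\<mu>\<^sub>h" \<gamma> \<tau> \<omega> "\<omega>\<^sub>r\<^sub>a\<^sub>n" \<zeta> x0 u0 x xhat u R xs us
    by (rule randprox.intro) (rule assms)+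
  have "c = rate" unfolding c_def rate_def ..
  moreover have "\<Psi> t s = lyapunov (x t s) (u t s)" for t s
    unfolding \<Psi>_def lyapunov_def dual_weight_def by simp
  moreover have "\<Psi>0 = lyapunov x0 u0"
    unfolding \<Psi>0_def lyapunov_def dual_weight_def by simp
  ultimately show ?thesis
    using rate_less_1 nn_integral_lyapunov_le AE_iterates_tendsto by simp
qed

end
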